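(* Under the standing setup, assume $\mathcal S=\mathcal S_G$. Then for any optimal solution $(\chi',q)$ to Problem (D) there also exists an optimal solution $(\chi,q)$ to Problem (D) (with the same $q$) satisfying $\chi\in\mathrm{Lin}(\mathrm{Chn}_{\tilde{\mathcal V}})$.
   Context: Standing setup. All Hilbert spaces are finite-dimensional complex. Fix an integer $T\ge1$ and systems $\mathcal V_1,\dots,\mathcal V_T,\mathcal W_1,\dots,\mathcal W_T$; set $\mathcal W_0:=\mathbb C$ and $\tilde{\mathcal V}:=\mathcal W_T\otimes\mathcal V_T\otimes\cdots\otimes\mathcal W_1\otimes\mathcal V_1$. For a system $\mathcal X$, $N_{\mathcal X}$ is its dimension, $I_{\mathcal X}$ its identity, $\mathrm{Her}_{\mathcal X}$ the real Hilbert space of Hermitian operators on $\mathcal X$ with inner product $\langle X,Y\rangle=\mathrm{Tr}(XY)$, and $\mathrm{Pos}_{\mathcal X}$ the set of positive semidefinite operators; $X\ge Y$ means $X-Y$ is positive semidefinite; $\mathrm{Tr}_{\mathcal X}$ is the partial trace over $\mathcal X$. For a subset $A$ of a real vector space, $\mathrm{Lin}(A)$ is its real linear span and $\overline A$ its closure. $\mathcal I_n:=\{0,\dots,n-1\}$. Combs: $\mathrm{Chn}_{\tilde{\mathcal V}}$ is the set of $c\in\mathrm{Pos}_{\tilde{\mathcal V}}$ for which there exist $c_t\in\mathrm{Pos}_{\mathcal W_t\otimes\mathcal V_t\otimes\cdots\otimes\mathcal W_1\otimes\mathcal V_1}$ ($t=1,\dots,T$) with $c_T=c$, $\mathrm{Tr}_{\mathcal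 W_t}c_t=I_{\mathcal V_t}\otimes c_{t-1}$ for $2\le t\le T$, and $\mathrm{Tr}_{\mathcal W_1}c_1=I_{\mathcal V_1}$. $\mathcal S_G$ is the set of operators $I_{\mathcal W_T}\otimes\tau_T$ where $\tau_t\in\mathrm{Pos}_{\mathcal V_t\otimes\mathcal W_{t-1}\otimes\mathcal V_{t-1}\otimes\cdots\otimes\mathcal W_1\otimes\mathcal V_1}$ ($t=1,\dots,T$) satisfy $\mathrm{Tr}\,\tau_1=1$ and $\mathrm{Tr}_{\mathcal V_t}\tau_t=I_{\mathcal W_{t-1}}\otimes\tau_{t-1}$ for $2\le t\le T$. Fix an integer $M\ge2$; $\mathcal C_G:=\mathrm{Pos}_{\tilde{\mathcal V}}^M$ and the set of (all) testers is $\mathcal T_G:=\{\Phi=\{\Phi_m\}_{m=0}^{M-1}\in\mathcal C_G:\sum_m\Phi_m\in\mathcal S_G\}$. Problem data: an integer $J\ge0$, $c_m,a_{j,m}\in\mathrm{Her}_{\tilde{\mathcal V}}$ and $b_j\in\mathbb R$ ($m\in\mathcal I_M$, $j\in\mathcal I_J$); $\eta_j(\Phi):=\sum_m\langle\Phi_m,a_{j,m}\rangle-b_j$ and $P(\Phi):=\sum_m\langle\Phi_m,c_m\rangle$. $\mathcal T$ is a nonempty convex subset of $\mathcal T_G$, $\mathsf P:=\{\Phi\in\mathcal T:\eta_j(\Phi)\le0\ \forall j\in\mathcal I_J\}$, and it is assumed that $\overline{\mathsf P}=\{\Phi\in\overline{\mathcal T}:\eta_j(\Phi)\le0\ \forall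 j\}$. $\mathcal C\subseteq\mathcal C_G$ is a closed convex cone and $\mathcal S\subseteq\mathcal S_G$ a closed convex set with $\overline{\mathcal T}=\{\Phi\in\mathcal C:\sum_m\Phi_m\in\mathcal S\}$. Problem (P): maximize $P(\Phi)$ subject to $\Phi\in\mathsf P$; its optimal value is $\sup_{\Phi\in\mathsf P}P(\Phi)$ ($-\infty$ if $\mathsf P=\emptyset$); an optimal solution is a $\Phi\in\mathsf P$ attaining it. Dual: $\mathcal C^*:=\{\{y_m\}_{m}\in\mathrm{Her}_{\tilde{\mathcal V}}^M:\sum_m\langle\Phi_m,y_m\rangle\ge0\ \forall\Phi\in\mathcal C\}$; $\lambda_{\mathcal S}(\chi):=\sup_{\varphi\in\mathcal S}\langle\varphi,\chi\rangle$; $z_m(q):=c_m-\sum_jq_ja_{j,m}$ for $q=\{q_j\}\in\mathbb R_+^J$; $\mathsf D:=\{(\chi,q)\in\mathrm{Her}_{\tilde{\mathcal V}}\times\mathbb R_+^J:\{\chi-z_m(q)\}_{m}\in\mathcal C^*\}$; $D_{\mathcal S}(\chi,q):=\lambda_{\mathcal S}(\chi)+\sum_jq_jb_j$. Problem (D): minimize $D_{\mathcal S}(\chi,q)$ over $(\chi,q)\in\mathsf D$; its optimal value is the infimum ($+\infty$ if $\mathsf D=\emptyset$); an optimal solution attains it. *)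

theory Defs
  imports "HOL-Analysis.Analysis"
begin

text \<open>Operators on a composite system with factor dimensions ds (leftmost factor first)
  are represented as matrices indexed by multi-indices (lists), required to vanish
  outside the computational basis.\<close>

type_synonym op = "nat list \<Rightarrow> nat list \<Rightarrow> complex"
type_synonym tup = "nat \<Rightarrow> op"

definition basis :: "nat list \<Rightarrow> nat list set" where
  "basis ds = {a. length a = length ds \<and> (\<forall>i<length ds. a ! i < ds ! i)}"

definition is_op :: "nat list \<Rightarrow> op \<Rightarrow> bool" where
  "is_op ds X \<longleftrightarrow> (\<forall>a b. a \<notin> basis ds \<or> b \<notin> basis ds \<longrightarrow> X a b = 0)"

definition herm :: "nat list \<Rightarrow> op \<Rightarrow> bool" where
  "herm ds X \<longleftrightarrow> is_op ds X \<and> (\<forall>a b. X a b = cnj (X b a))"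

definition psd :: "nat list \<Rightarrow> op \<Rightarrow> bool" where
  "psd ds X \<longleftrightarrow> herm ds X \<and>
     (\<forall>v :: nat list \<Rightarrow> complex.
        0 \<le> Re (\<Sum>a\<in>basis ds. \<Sum>b\<in>basis ds. cnj (v a) * X a b * v b))"

definition ptr_head :: "nat \<Rightarrow> op \<Rightarrow> op" where
  "ptr_head d X = (\<lambda>a b. \<Sum>i<d. X (i # a) (i # b))"

text \<open>Tensoring with the identity on a new leftmost factor of dimension d.\<close>
definition idt :: "nat \<Rightarrow> op \<Rightarrow> op" where
  "idt d X = (\<lambda>a b. case a of [] \<Rightarrow> 0 | i # a' \<Rightarrow>
                 (case b of [] \<Rightarrow> 0 | j # b' \<Rightarrow> if i = j \<and> i < d then X a' b' else 0))"

text \<open>The identity on the trivial system \<open>\<complex>\<close> (no factors).\<close>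
definition scalar1 :: op where
  "scalar1 = (\<lambda>a b. if a = [] \<and> b = [] then 1 else 0)"

definition trace :: "nat list \<Rightarrow> op \<Rightarrow> complex" where
  "trace ds X = (\<Sum>a\<in>basis ds. X a a)"

text \<open>Hilbert-Schmidt inner product \<open>Tr(XY)\<close> (real on Hermitian operators).\<close>
definition hs :: "nat list \<Rightarrow> op \<Rightarrow> op \<Rightarrow> real" where
  "hs ds X Y = Re (\<Sum>a\<in>basis ds. \<Sum>b\<in>basis ds. X a b * Y b a)"

text \<open>Dimensions of \<open>W_t \<otimes> V_t \<otimes> \<dots> \<otimes> W_1 \<otimes> V_1\<close>.\<close>
fun Ld :: "(nat \<Rightarrow> nat) \<Rightarrow> (nat \<Rightarrow> nat) \<Rightarrow> nat \<Rightarrow> nat list" where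
  "Ld w v 0 = []"
| "Ld w v (Suc t) = w (Suc t) # v (Suc t) # Ld w v t"

text \<open>Dimensions of \<open>V_t \<otimes> W_{t-1} \<otimes> V_{t-1} \<otimes> \<dots> \<otimes> W_1 \<otimes> V_1\<close> (for \<open>t \<ge> 1\<close>).\<close>
definition Td :: "(nat \<Rightarrow> nat) \<Rightarrow> (nat \<Rightarrow> nat) \<Rightarrow> nat \<Rightarrow> nat list" where
  "Td w v t = v t # Ld w v (t - 1)"

definition Chn :: "(nat \<Rightarrow> nat) \<Rightarrow> (nat \<Rightarrow> nat) \<Rightarrow> nat \<Rightarrow> op set" where
  "Chn w v T = {c. psd (Ld w v T) c \<and>
     (\<exists>cs :: nat \<Rightarrow> op. cs T = c \<and>
        (\<forall>t\<in>{1..T}. psd (Ld w v t) (cs t)) \<and>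
        (\<forall>t\<in>{2..T}. ptr_head (w t) (cs t) = idt (v t) (cs (t - 1))) \<and>
        ptr_head (w 1) (cs 1) = idt (v 1) scalar1)}"

definition SG :: "(nat \<Rightarrow> nat) \<Rightarrow> (nat \<Rightarrow> nat) \<Rightarrow> nat \<Rightarrow> op set" where
  "SG w v T = {idt (w T) (\<tau> T) | \<tau> :: nat \<Rightarrow> op.
     (\<forall>t\<in>{1..T}. psd (Td w v t) (\<tau> t)) \<and>
     trace (Td w v 1) (\<tau> 1) = 1 \<and>
     (\<forall>t\<in>{2..T}. ptr_head (v t) (\<tau> t) = idt (w (t - 1)) (\<tau> (t - 1)))}"

text \<open>M-tuples of operators: components with index \<open>\<ge> M\<close> are zero.\<close>
definition CG :: "(nat \<Rightarrow> nat) \<Rightarrow> (nat \<Rightarrow> nat) \<Rightarrow> nat \<Rightarrow> nat \<Rightarrow> tup set" where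
  "CG w v T M = {\<Phi>. (\<forall>m<M. psd (Ld w v T) (\<Phi> m)) \<and> (\<forall>m\<ge>M. \<Phi> m = (\<lambda>_ _. 0))}"

definition opsum :: "nat \<Rightarrow> tup \<Rightarrow> op" where
  "opsum M \<Phi> = (\<lambda>a b. \<Sum>m<M. \<Phi> m a b)"

definition TG :: "(nat \<Rightarrow> nat) \<Rightarrow> (nat \<Rightarrow> nat) \<Rightarrow> nat \<Rightarrow> nat \<Rightarrow> tup set" where
  "TG w v T M = {\<Phi> \<in> CG w v T M. opsum M \<Phi> \<in> SG w v T}"

definition tinner :: "nat list \<Rightarrow> nat \<Rightarrow> tup \<Rightarrow> tup \<Rightarrow> real" where
  "tinner ds M \<Phi> Y = (\<Sum>m<M. hs ds (\<Phi> m) (Y m))"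

definition convex_tup :: "tup set \<Rightarrow> bool" where
  "convex_tup A \<longleftrightarrow> (\<forall>x\<in>A. \<forall>y\<in>A. \<forall>u::real. 0 \<le> u \<and> u \<le> 1 \<longrightarrow>
      (\<lambda>m a b. of_real u * x m a b + of_real (1 - u) * y m a b) \<in> A)"

definition cone_tup :: "tup set \<Rightarrow> bool" where
  "cone_tup A \<longleftrightarrow> (\<forall>x\<in>A. \<forall>r::real. 0 \<le> r \<longrightarrow> (\<lambda>m a b. of_real r * x m a b) \<in> A)"

definition lin_span :: "op set \<Rightarrow> op set" where
  "lin_span A = {(\<lambda>a b. \<Sum>c\<in>F. of_real (r c) * c a b) | F r. finite F \<and> F \<subseteq> A}"

definition dual_cone :: "nat list \<Rightarrow> nat \<Rightarrow> tup set \<Rightarrow> tup set" where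
  "dual_cone ds M C = {y. (\<forall>m<M. herm ds (y m)) \<and> (\<forall>m\<ge>M. y m = (\<lambda>_ _. 0)) \<and>
      (\<forall>\<Phi>\<in>C. 0 \<le> tinner ds M \<Phi> y)}"

definition lamS :: "nat list \<Rightarrow> op set \<Rightarrow> op \<Rightarrow> real" where
  "lamS ds S chi = Sup ((\<lambda>\<phi>. hs ds \<phi> chi) ` S)"

definition zq :: "nat \<Rightarrow> tup \<Rightarrow> (nat \<Rightarrow> tup) \<Rightarrow> (nat \<Rightarrow> real) \<Rightarrow> nat \<Rightarrow> op" where
  "zq J c a q m = (\<lambda>x y. c m x y - (\<Sum>j<J. of_real (q j) * a j m x y))"

definition Dset :: "nat list \<Rightarrow> nat \<Rightarrow> nat \<Rightarrow> tup \<Rightarrow> (nat \<Rightarrow> tup) \<Rightarrow> tup set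
    \<Rightarrow> (op \<times> (nat \<Rightarrow> real)) set" where
  "Dset ds M J c a C = {(chi, q). herm ds chi \<and> (\<forall>j<J. 0 \<le> q j) \<and> (\<forall>j\<ge>J. q j = 0) \<and>
      (\<lambda>m. if m < M then (\<lambda>x y. chi x y - zq J c a q m x y) else (\<lambda>_ _. 0))
        \<in> dual_cone ds M C}"

definition DS :: "nat list \<Rightarrow> op set \<Rightarrow> nat \<Rightarrow> (nat \<Rightarrow> real) \<Rightarrow> op \<Rightarrow> (nat \<Rightarrow> real) \<Rightarrow> real" where
  "DS ds S J b chi q = lamS ds S chi + (\<Sum>j<J. q j * b j)"

definition opt_D :: "nat list \<Rightarrow> nat \<Rightarrow> nat \<Rightarrow> tup \<Rightarrow> (nat \<Rightarrow> tup) \<Rightarrow> (nat \<Rightarrow> real)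
    \<Rightarrow> tup set \<Rightarrow> op set \<Rightarrow> op \<times> (nat \<Rightarrow> real) \<Rightarrow> bool" where
  "opt_D ds M J c a b C S p \<longleftrightarrow> p \<in> Dset ds M J c a C \<and>
     (\<forall>p'\<in>Dset ds M J c a C. DS ds S J b (fst p) (snd p) \<le> DS ds S J b (fst p') (snd p'))"

end

theory Submission
  imports Defs
begin

text \<open>Only the dual constraint and the objective involve \<open>\<chi>\<close>. The constraint survives
  replacing \<open>\<chi>'\<close> by any \<open>\<chi> \<ge> \<chi>'\<close>, because \<open>C\<close> consists of tuples of psd operators, and a
  generalised chain \<open>Y\<close> normalised to \<open>l\<close> pairs to exactly \<open>l\<close> with every tester, so
  \<open>\<lambda>\<^sub>S(Y\<^sub>T) = l\<close>. Hence it suffices to dominate \<open>\<chi>'\<close> by such a \<open>Y\<^sub>T\<close> with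
  \<open>l \<le> \<lambda>\<^sub>S(\<chi>')\<close>; shifting by a multiple of the identity chain reduces this to psd \<open>\<chi>'\<close>.
  This is comb-tester duality: if no dominating chain existed, the residual of the comb
  equations and of the dominance constraint could not vanish on the closed convex set of
  relaxed candidates, and the minimum-norm residual would separate it from zero. The separating
  functional is psd slot by slot, and normalised by its first trace it yields a tester
  \<open>s\<close> with \<open>\<langle>s, \<chi>'\<rangle> > \<lambda>\<^sub>S(\<chi>')\<close>, a contradiction. Finally, a psd chain is a difference
  of two multiples of combs, so the dominating \<open>\<chi>\<close> lies in their span.\<close>

section \<open>Operator algebra\<close>

definition op_zero :: op where "op_zero = (\<lambda>_ _. 0)"

definition op_add :: "op \<Rightarrow> op \<Rightarrow> op" where "op_add X Y = (\<lambda>a b. X a b + Y a b)"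

definition op_diff :: "op \<Rightarrow> op \<Rightarrow> op" where "op_diff X Y = (\<lambda>a b. X a b - Y a b)"

definition op_scale :: "real \<Rightarrow> op \<Rightarrow> op" where "op_scale r X = (\<lambda>a b. complex_of_real r * X a b)"

definition qform :: "nat list \<Rightarrow> op \<Rightarrow> (nat list \<Rightarrow> complex) \<Rightarrow> complex" where
  "qform ds X u = (\<Sum>a\<in>basis ds. \<Sum>b\<in>basis ds. cnj (u a) * X a b * u b)"

lemma op_zero_apply[simp]: "op_zero a b = 0" by (simp add: op_zero_def)

lemma op_add_apply[simp]: "op_add X Y a b = X a b + Y a b" by (simp add: op_add_def)

lemma op_diff_apply[simp]: "op_diff X Y a b = X a b - Y a b" by (simp add: op_diff_def)

lemma op_scale_apply[simp]: "op_scale r X a b = complex_of_real r * X a b" by (simp add: op_scale_def)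

lemma op_scale_scale: "op_scale r (op_scale s X) = op_scale (r * s) X"
  by (intro ext) simp

lemma op_scale_one[simp]: "op_scale 1 X = X"
  by (intro ext) simp

lemma op_scale_zero[simp]: "op_scale 0 X = op_zero"
  by (intro ext) simp

lemma op_add_scale: "op_add (op_scale r X) (op_scale s X) = op_scale (r + s) X"
  by (intro ext) (simp add: distrib_right)

lemma op_add_zero[simp]: "op_add X op_zero = X" "op_add op_zero X = X"
  by (intro ext, simp)+

lemma op_diff_zero[simp]: "op_diff X op_zero = X"
  by (intro ext) simp

lemma op_scale_op_zero[simp]: "op_scale r op_zero = op_zero"
  by (intro ext) simp

lemma basis_Nil[simp]: "basis [] = {[]}"
  by (auto simp: basis_def)

lemma Cons_in_basis[simp]: "(i # a \<in> basis (d # ds)) \<longleftrightarrow> i < d \<and> a \<in> basis ds"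
  by (auto simp: basis_def nth_Cons split: nat.splits)

lemma Nil_notin_basis_Cons[simp]: "[] \<notin> basis (d # ds)"
  by (auto simp: basis_def)

lemma basis_Cons: "basis (d # ds) = (\<lambda>(i,a). i # a) ` ({..<d} \<times> basis ds)"
proof (rule set_eqI)
  fix x show "x \<in> basis (d # ds) \<longleftrightarrow> x \<in> (\<lambda>(i,a). i # a) ` ({..<d} \<times> basis ds)"
    by (cases x) auto
qed

lemma finite_basis[simp]: "finite (basis ds)"
proof (induction ds)
  case Nil then show ?case by simp
next
  case (Cons d ds) then show ?case by (simp add: basis_Cons)
qed

lemma sum_basis_Cons: "(\<Sum>x\<in>basis (d # ds). f x) = (\<Sum>i<d. \<Sum>a\<in>basis ds. f (i # a))"
proof -
  have inj: "inj_on (\<lambda>(i,a). i # a) ({..<d} \<times> basis ds)"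
    by (auto simp: inj_on_def)
  have "(\<Sum>x\<in>basis (d # ds). f x) = (\<Sum>p\<in>{..<d} \<times> basis ds. f ((\<lambda>(i,a). i # a) p))"
    unfolding basis_Cons by (rule sum.reindex[OF inj, unfolded comp_def])
  also have "\<dots> = (\<Sum>i<d. \<Sum>a\<in>basis ds. f (i # a))"
    by (simp add: sum.cartesian_product split_def)
  finally show ?thesis .
qed

lemma hs_commute: "hs ds X Y = hs ds Y X"
  unfolding hs_def by (subst sum.swap) (simp add: mult.commute)

lemma hs_add_right: "hs ds X (op_add Y Z) = hs ds X Y + hs ds X Z"
  unfolding hs_def by (simp add: distrib_left sum.distrib)

lemma hs_diff_right: "hs ds X (op_diff Y Z) = hs ds X Y - hs ds X Z"
  unfolding hs_def by (simp add: right_diff_distrib sum_subtractf)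

lemma hs_scale_right: "hs ds X (op_scale r Y) = r * hs ds X Y"
proof -
  have "(\<Sum>a\<in>basis ds. \<Sum>b\<in>basis ds. X a b * (complex_of_real r * Y b a))
      = complex_of_real r * (\<Sum>a\<in>basis ds. \<Sum>b\<in>basis ds. X a b * Y b a)"
    by (simp add: sum_distrib_left mult_ac)
  then show ?thesis unfolding hs_def by simp
qed

lemma hs_zero_right[simp]: "hs ds X op_zero = 0" by (simp add: hs_def)

lemma hs_add_left: "hs ds (op_add Y Z) X = hs ds Y X + hs ds Z X"
  by (simp add: hs_commute[of ds _ X] hs_add_right)

lemma hs_diff_left: "hs ds (op_diff Y Z) X = hs ds Y X - hs ds Z X"
  by (simp add: hs_commute[of ds _ X] hs_diff_right)

lemma hs_scale_left: "hs ds (op_scale r Y) X = r * hs ds Y X"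
  by (simp add: hs_commute[of ds _ X] hs_scale_right)

lemma hs_zero_left[simp]: "hs ds op_zero X = 0" by (simp add: hs_def)

lemma hs_diff_zero_right: "hs ds A (op_diff op_zero B) = - hs ds A B"
  using hs_diff_right[of ds A op_zero B] by simp

lemma hs_self_combination: "hs ds (op_add (op_scale a A) (op_scale b B)) (op_add (op_scale a A) (op_scale b B))
   = a * a * hs ds A A + 2 * a * b * hs ds A B + b * b * hs ds B B"
  unfolding hs_add_left hs_add_right hs_scale_left hs_scale_right using hs_commute[of ds B A] by (simp add: algebra_simps)

lemma trace_diff: "trace ds (op_diff X Y) = trace ds X - trace ds Y"
  by (simp add: trace_def sum_subtractf)

lemma ptr_head_add: "ptr_head d (op_add X Y) = op_add (ptr_head d X) (ptr_head d Y)"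
  by (intro ext) (simp add: ptr_head_def sum.distrib)

lemma ptr_head_scale: "ptr_head d (op_scale r X) = op_scale r (ptr_head d X)"
  by (intro ext) (simp add: ptr_head_def sum_distrib_left)

lemma ptr_head_zero[simp]: "ptr_head d op_zero = op_zero"
  by (intro ext) (simp add: ptr_head_def)

lemma idt_Cons: "idt d X (i # a) (j # b) = (if i = j \<and> i < d then X a b else 0)"
  by (simp add: idt_def)

lemma idt_add: "idt d (op_add X Y) = op_add (idt d X) (idt d Y)"
proof (intro ext)
  fix a b show "idt d (op_add X Y) a b = op_add (idt d X) (idt d Y) a b"
    unfolding idt_def by (cases a; cases b) auto
qed

lemma idt_diff: "idt d (op_diff X Y) = op_diff (idt d X) (idt d Y)"
proof (intro ext)
  fix a b show "idt d (op_diff X Y) a b = op_diff (idt d X) (idt d Y) a b"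
    unfolding idt_def by (cases a; cases b) auto
qed

lemma idt_scale: "idt d (op_scale r X) = op_scale r (idt d X)"
  by (intro ext) (simp add: idt_def split: list.splits)

lemma idt_zero[simp]: "idt d op_zero = op_zero"
  by (intro ext) (simp add: idt_def split: list.splits)

lemma ptr_head_idt: "ptr_head d (idt d Y) = op_scale (real d) Y"
  by (intro ext) (simp add: ptr_head_def idt_def)

lemma hs_idt: "hs (d # ds) (idt d A) B = hs ds A (ptr_head d B)"
proof -
  have "(\<Sum>x\<in>basis (d # ds). \<Sum>y\<in>basis (d # ds). idt d A x y * B y x)
      = (\<Sum>i<d. \<Sum>a\<in>basis ds. \<Sum>j<d. \<Sum>b\<in>basis ds. (if i = j \<and> i < d then A a b else 0) * B (j # b) (i # a))"
    by (simp add: sum_basis_Cons idt_Cons)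
  also have "\<dots> = (\<Sum>i<d. \<Sum>a\<in>basis ds. \<Sum>b\<in>basis ds. A a b * B (i # b) (i # a))"
  proof (rule sum.cong[OF refl], rule sum.cong[OF refl])
    fix i a assume "i \<in> {..<d}"
    have "(\<Sum>j<d. \<Sum>b\<in>basis ds. (if i = j \<and> i < d then A a b else 0) * B (j # b) (i # a))
        = (\<Sum>j<d. if j = i then (\<Sum>b\<in>basis ds. A a b * B (j # b) (i # a)) else 0)"
      using \<open>i \<in> {..<d}\<close> by (intro sum.cong) auto
    also have "\<dots> = (\<Sum>b\<in>basis ds. A a b * B (i # b) (i # a))"
      using \<open>i \<in> {..<d}\<close> by (simp add: sum.delta)
    finally show "(\<Sum>j<d. \<Sum>b\<in>basis ds. (if i = j \<and> i < d then A a b else 0) * B (j # b) (i # a))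
        = (\<Sum>b\<in>basis ds. A a b * B (i # b) (i # a))" .
  qed
  also have "\<dots> = (\<Sum>a\<in>basis ds. \<Sum>b\<in>basis ds. A a b * ptr_head d B b a)"
    unfolding ptr_head_def
    by (subst sum.swap) (simp add: sum_distrib_left sum.swap[of _ "{..<d}"])
  finally show ?thesis unfolding hs_def by simp
qed

lemma trace_idt: "trace (d # ds) (idt d X) = of_nat d * trace ds X"
  by (simp add: trace_def sum_basis_Cons idt_Cons)

lemma trace_ptr_head: "trace ds (ptr_head d X) = trace (d # ds) X"
  by (simp add: trace_def sum_basis_Cons ptr_head_def) (rule sum.swap)

lemma qform_idt: "qform (d # ds) (idt d A) u = (\<Sum>i<d. qform ds A (\<lambda>a. u (i # a)))"
proof -
  have "qform (d # ds) (idt d A) u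
     = (\<Sum>i<d. \<Sum>a\<in>basis ds. \<Sum>j<d. \<Sum>b\<in>basis ds. cnj (u (i#a)) * (if i = j \<and> i < d then A a b else 0) * u (j # b))"
    by (simp add: qform_def sum_basis_Cons idt_Cons)
  also have "\<dots> = (\<Sum>i<d. \<Sum>a\<in>basis ds. \<Sum>b\<in>basis ds. cnj (u (i#a)) * A a b * u (i # b))"
  proof (rule sum.cong[OF refl], rule sum.cong[OF refl])
    fix i a assume "i \<in> {..<d}"
    have "(\<Sum>j<d. \<Sum>b\<in>basis ds. cnj (u (i#a)) * (if i = j \<and> i < d then A a b else 0) * u (j # b))
        = (\<Sum>j<d. if j = i then (\<Sum>b\<in>basis ds. cnj (u (i#a)) * A a b * u (j # b)) else 0)"
      using \<open>i \<in> {..<d}\<close> by (intro sum.cong) auto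
    also have "\<dots> = (\<Sum>b\<in>basis ds. cnj (u (i#a)) * A a b * u (i # b))"
      using \<open>i \<in> {..<d}\<close> by (simp add: sum.delta)
    finally show "(\<Sum>j<d. \<Sum>b\<in>basis ds. cnj (u (i#a)) * (if i = j \<and> i < d then A a b else 0) * u (j # b))
        = (\<Sum>b\<in>basis ds. cnj (u (i#a)) * A a b * u (i # b))" .
  qed
  finally show ?thesis by (simp add: qform_def)
qed

definition embed_head :: "nat \<Rightarrow> (nat list \<Rightarrow> complex) \<Rightarrow> nat list \<Rightarrow> complex" where
  "embed_head i u x = (case x of [] \<Rightarrow> 0 | j # a \<Rightarrow> if j = i then u a else 0)"

lemma qform_ptr_head: "qform ds (ptr_head d X) u = (\<Sum>i<d. qform (d # ds) X (embed_head i u))"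
proof -
  have "(\<Sum>i<d. qform (d # ds) X (embed_head i u))
     = (\<Sum>i<d. \<Sum>j<d. \<Sum>a\<in>basis ds. \<Sum>k<d. \<Sum>b\<in>basis ds. cnj (embed_head i u (j#a)) * X (j#a) (k#b) * embed_head i u (k#b))"
    by (simp add: qform_def sum_basis_Cons)
  also have "\<dots> = (\<Sum>i<d. \<Sum>a\<in>basis ds. \<Sum>b\<in>basis ds. cnj (u a) * X (i#a) (i#b) * u b)"
  proof (rule sum.cong[OF refl])
    fix i assume i: "i \<in> {..<d}"
    have "(\<Sum>j<d. \<Sum>a\<in>basis ds. \<Sum>k<d. \<Sum>b\<in>basis ds. cnj (embed_head i u (j#a)) * X (j#a) (k#b) * embed_head i u (k#b))
       = (\<Sum>j<d. if j = i then (\<Sum>a\<in>basis ds. \<Sum>k<d. \<Sum>b\<in>basis ds. cnj (u a) * X (i#a) (k#b) * embed_head i u (k#b)) else 0)"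
      by (intro sum.cong) (auto simp: embed_head_def)
    also have "\<dots> = (\<Sum>a\<in>basis ds. \<Sum>k<d. \<Sum>b\<in>basis ds. cnj (u a) * X (i#a) (k#b) * embed_head i u (k#b))"
      using i by (simp add: sum.delta)
    also have "\<dots> = (\<Sum>a\<in>basis ds. \<Sum>k<d. if k = i then (\<Sum>b\<in>basis ds. cnj (u a) * X (i#a) (i#b) * u b) else 0)"
      by (intro sum.cong) (auto simp: embed_head_def)
    also have "\<dots> = (\<Sum>a\<in>basis ds. \<Sum>b\<in>basis ds. cnj (u a) * X (i#a) (i#b) * u b)"
      using i by (simp add: sum.delta)
    finally show "(\<Sum>j<d. \<Sum>a\<in>basis ds. \<Sum>k<d. \<Sum>b\<in>basis ds. cnj (embed_head i u (j#a)) * X (j#a) (k#b) * embed_head i u (k#b))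
       = (\<Sum>a\<in>basis ds. \<Sum>b\<in>basis ds. cnj (u a) * X (i#a) (i#b) * u b)" .
  qed
  also have "\<dots> = qform ds (ptr_head d X) u"
    unfolding qform_def ptr_head_def
    by (simp add: sum_distrib_left sum_distrib_right sum.swap[of _ "{..<d}"])
  finally show ?thesis by simp
qed

lemma trace_scalar: "trace [] (op_scale l scalar1) = complex_of_real l"
  by (simp add: trace_def scalar1_def)

lemma hs_scalar1: "hs [] (op_scale l scalar1) Y = l * Re (Y [] [])"
  by (simp add: hs_def scalar1_def)

lemma hs_idt_scalar:
  "hs [d] A (idt d (op_scale l scalar1)) = l * Re (trace [d] A)"
proof -
  have "hs [d] A (idt d (op_scale l scalar1)) = hs [] (op_scale l scalar1) (ptr_head d A)"
    by (subst hs_commute) (rule hs_idt)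
  also have "\<dots> = l * Re (trace [d] A)"
    by (simp add: hs_scalar1 ptr_head_def trace_def sum_basis_Cons)
  finally show ?thesis .
qed

section \<open>Hermitian and positive semidefinite operators\<close>

lemma psd_qform_nonneg: "psd ds X \<Longrightarrow> 0 \<le> Re (qform ds X u)"
  by (simp add: psd_def qform_def)

lemma psd_iff_qform: "psd ds X \<longleftrightarrow> herm ds X \<and> (\<forall>u. 0 \<le> Re (qform ds X u))"
  by (simp add: psd_def qform_def)

lemma herm_is_op: "herm ds X \<Longrightarrow> is_op ds X" unfolding herm_def by blast

lemma psd_herm: "psd ds X \<Longrightarrow> herm ds X" by (simp add: psd_def)

lemma is_op_outside: "is_op ds X \<Longrightarrow> a \<notin> basis ds \<or> b \<notin> basis ds \<Longrightarrow> X a b = 0"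
  by (simp add: is_op_def)

lemma herm_cnj: "herm ds X \<Longrightarrow> X a b = cnj (X b a)" unfolding herm_def by blast

lemma hermI: "is_op ds X \<Longrightarrow> (\<And>a b. X a b = cnj (X b a)) \<Longrightarrow> herm ds X"
  unfolding herm_def by blast

lemma herm_add:
  assumes "herm ds X" "herm ds Y"
  shows "herm ds (op_add X Y)"
proof (rule hermI)
  show "is_op ds (op_add X Y)" using assms[THEN herm_is_op] by (simp add: is_op_def)
  show "op_add X Y a b = cnj (op_add X Y b a)" for a b using assms[THEN herm_cnj, of a b] by simp
qed

lemma herm_diff:
  assumes "herm ds X" "herm ds Y"
  shows "herm ds (op_diff X Y)"
proof (rule hermI)
  show "is_op ds (op_diff X Y)" using assms[THEN herm_is_op] by (simp add: is_op_def)
  show "op_diff X Y a b = cnj (op_diff X Y b a)" for a b using assms[THEN herm_cnj, of a b] by simp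
qed

lemma herm_scale:
  assumes "herm ds X"
  shows "herm ds (op_scale r X)"
proof (rule hermI)
  show "is_op ds (op_scale r X)" using herm_is_op[OF assms] by (simp add: is_op_def)
  show "op_scale r X a b = cnj (op_scale r X b a)" for a b using herm_cnj[OF assms, of a b] by simp
qed

lemma herm_zero: "herm ds op_zero"
  by (rule hermI) (auto simp: is_op_def)

lemma herm_scalar: "herm [] (op_scale l scalar1)"
  by (rule hermI) (auto simp: is_op_def scalar1_def)

lemma is_op_idt: "is_op ds A \<Longrightarrow> is_op (d # ds) (idt d A)"
  by (auto simp: is_op_def idt_def split: list.splits)

lemma herm_idt:
  assumes "herm ds A"
  shows "herm (d # ds) (idt d A)"
proof (rule hermI)
  show "is_op (d # ds) (idt d A)" using is_op_idt herm_is_op[OF assms] by blast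
  show "idt d A a b = cnj (idt d A b a)" for a b
    by (cases a; cases b) (auto simp: idt_def simp del: complex_cnj_cancel_iff intro: herm_cnj[OF assms])
qed

lemma is_op_ptr_head: "is_op (d # ds) X \<Longrightarrow> is_op ds (ptr_head d X)"
  by (auto simp: is_op_def ptr_head_def)

lemma herm_ptr_head:
  assumes "herm (d # ds) X"
  shows "herm ds (ptr_head d X)"
proof (rule hermI)
  show "is_op ds (ptr_head d X)" using is_op_ptr_head herm_is_op[OF assms] by blast
  show "ptr_head d X a b = cnj (ptr_head d X b a)" for a b
  proof -
    have "X (i # a) (i # b) = cnj (X (i # b) (i # a))" for i by (rule herm_cnj[OF assms])
    then show ?thesis by (simp add: ptr_head_def cnj_sum)
  qed
qed

lemma qform_add: "qform ds (op_add X Y) u = qform ds X u + qform ds Y u"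
  by (simp add: qform_def distrib_left distrib_right sum.distrib)

lemma qform_diff: "qform ds (op_diff X Y) u = qform ds X u - qform ds Y u"
  by (simp add: qform_def left_diff_distrib right_diff_distrib sum_subtractf)

lemma qform_scale: "qform ds (op_scale r X) u = complex_of_real r * qform ds X u"
  by (simp add: qform_def sum_distrib_left mult_ac)

lemma psd_add: "psd ds X \<Longrightarrow> psd ds Y \<Longrightarrow> psd ds (op_add X Y)"
  by (simp add: psd_iff_qform herm_add qform_add)

lemma psd_scale: "psd ds X \<Longrightarrow> 0 \<le> r \<Longrightarrow> psd ds (op_scale r X)"
  by (simp add: psd_iff_qform herm_scale qform_scale)

lemma psd_zero: "psd ds op_zero"
  by (simp add: psd_iff_qform herm_zero qform_def)

lemma psd_idt: "psd ds A \<Longrightarrow> psd (d # ds) (idt d A)"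
  by (simp add: psd_iff_qform herm_idt qform_idt sum_nonneg)

lemma psd_idt_cancel:
  assumes "psd (d # ds) (idt d A)" "1 \<le> d"
  shows "psd ds A"
proof -
  have H: "herm (d # ds) (idt d A)" using assms psd_herm by auto
  have hA: "herm ds A"
    unfolding herm_def is_op_def
  proof (intro conjI allI impI)
    fix a b assume "a \<notin> basis ds \<or> b \<notin> basis ds"
    then have "0 # a \<notin> basis (d # ds) \<or> 0 # b \<notin> basis (d # ds)" by auto
    then have "idt d A (0 # a) (0 # b) = 0" using H herm_is_op is_op_outside by blast
    then show "A a b = 0" using assms(2) by (simp add: idt_Cons)
  next
    fix a b
    have "idt d A (0 # a) (0 # b) = cnj (idt d A (0 # b) (0 # a))" using H herm_cnj by blast
    then show "A a b = cnj (A b a)" using assms(2) by (simp add: idt_Cons)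
  qed
  have "0 \<le> Re (qform ds A u)" for u
  proof -
    define u' where "u' = embed_head 0 u"
    have "qform (d # ds) (idt d A) u' = (\<Sum>i<d. qform ds A (\<lambda>a. u' (i # a)))" by (rule qform_idt)
    also have "\<dots> = (\<Sum>i<d. if i = 0 then qform ds A u else 0)"
      by (intro sum.cong) (auto simp: u'_def embed_head_def qform_def)
    also have "\<dots> = qform ds A u" using assms(2) by (simp add: sum.delta)
    finally show ?thesis using psd_qform_nonneg[OF assms(1), of u'] by simp
  qed
  then show ?thesis using hA by (simp add: psd_iff_qform)
qed

lemma psd_ptr_head: "psd (d # ds) X \<Longrightarrow> psd ds (ptr_head d X)"
  by (simp add: psd_iff_qform herm_ptr_head qform_ptr_head sum_nonneg)

definition sesq :: "nat list \<Rightarrow> op \<Rightarrow> (nat list \<Rightarrow> complex) \<Rightarrow> (nat list \<Rightarrow> complex) \<Rightarrow> complex" where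
  "sesq ds X u v = (\<Sum>a\<in>basis ds. \<Sum>b\<in>basis ds. cnj (u a) * X a b * v b)"

lemma qform_sesq: "qform ds X u = sesq ds X u u" by (simp add: qform_def sesq_def)

lemma sesq_add_left: "sesq ds X (\<lambda>x. u x + e x) v = sesq ds X u v + sesq ds X e v"
  by (simp add: sesq_def distrib_left distrib_right sum.distrib)

lemma sesq_add_right: "sesq ds X u (\<lambda>x. v x + e x) = sesq ds X u v + sesq ds X u e"
  by (simp add: sesq_def distrib_left distrib_right sum.distrib)

lemma sesq_delta_left: "a0 \<in> basis ds \<Longrightarrow>
   sesq ds X (\<lambda>x. if x = a0 then c else 0) v = cnj c * (\<Sum>b\<in>basis ds. X a0 b * v b)"
proof -
  assume a0: "a0 \<in> basis ds"
  have "sesq ds X (\<lambda>x. if x = a0 then c else 0) v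
      = (\<Sum>a\<in>basis ds. if a = a0 then (\<Sum>b\<in>basis ds. cnj c * X a0 b * v b) else 0)"
    unfolding sesq_def by (intro sum.cong) auto
  also have "\<dots> = (\<Sum>b\<in>basis ds. cnj c * X a0 b * v b)" using a0 by (simp add: sum.delta)
  finally show ?thesis by (simp add: sum_distrib_left mult_ac)
qed

lemma sesq_delta_right: "a0 \<in> basis ds \<Longrightarrow>
   sesq ds X u (\<lambda>x. if x = a0 then c else 0) = c * (\<Sum>a\<in>basis ds. cnj (u a) * X a a0)"
proof -
  assume a0: "a0 \<in> basis ds"
  have "sesq ds X u (\<lambda>x. if x = a0 then c else 0)
      = (\<Sum>a\<in>basis ds. \<Sum>b\<in>basis ds. if b = a0 then cnj (u a) * X a a0 * c else 0)"
    unfolding sesq_def by (intro sum.cong) auto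
  also have "\<dots> = (\<Sum>a\<in>basis ds. cnj (u a) * X a a0 * c)" using a0 by (simp add: sum.delta)
  finally show ?thesis by (simp add: sum_distrib_left mult_ac)
qed

lemma sesq_delta_delta: "a0 \<in> basis ds \<Longrightarrow> b0 \<in> basis ds \<Longrightarrow>
   sesq ds X (\<lambda>x. if x = a0 then c else 0) (\<lambda>x. if x = b0 then e else 0) = cnj c * X a0 b0 * e"
proof -
  assume a0: "a0 \<in> basis ds" and b0: "b0 \<in> basis ds"
  have "(\<Sum>b\<in>basis ds. X a0 b * (if b = b0 then e else 0)) = (\<Sum>b\<in>basis ds. if b = b0 then X a0 b0 * e else 0)"
    by (intro sum.cong) auto
  also have "\<dots> = X a0 b0 * e" using b0 by (simp add: sum.delta)
  finally show ?thesis using sesq_delta_left[OF a0] by (simp add: mult_ac)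
qed

lemma qform_delta: "a0 \<in> basis ds \<Longrightarrow> qform ds X (\<lambda>x. if x = a0 then 1 else 0) = X a0 a0"
  by (simp add: qform_sesq sesq_delta_delta)

lemma qform_two_point:
  assumes "a0 \<in> basis ds" "b0 \<in> basis ds"
  shows "qform ds X (\<lambda>x. (if x = a0 then c else 0) + (if x = b0 then e else 0))
     = cnj c * X a0 a0 * c + cnj c * X a0 b0 * e + cnj e * X b0 a0 * c + cnj e * X b0 b0 * e"
  using assms by (simp add: qform_sesq sesq_add_left sesq_add_right sesq_delta_delta)

lemma herm_diag_Im: "herm ds X \<Longrightarrow> Im (X a a) = 0"
proof -
  assume h: "herm ds X"
  have "X a a = cnj (X a a)" using herm_cnj[OF h] .
  then have "Im (X a a) = Im (cnj (X a a))" by simp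
  then show ?thesis by simp
qed

lemma herm_diag_real: "herm ds X \<Longrightarrow> X a a = complex_of_real (Re (X a a))"
  using herm_diag_Im[of ds X a] by (simp add: complex_eq_iff)

lemma psd_diag_nonneg: "psd ds X \<Longrightarrow> 0 \<le> Re (X a a)"
proof -
  assume p: "psd ds X"
  show ?thesis
  proof (cases "a \<in> basis ds")
    case True then show ?thesis using psd_qform_nonneg[OF p, of "\<lambda>x. if x = a then 1 else 0"] qform_delta by simp
  next
    case False
    then have "X a a = 0" using is_op_outside[OF herm_is_op[OF psd_herm[OF p]]] by blast
    then show ?thesis by simp
  qed
qed

lemma cnj_mult_self: "cnj z * z = complex_of_real ((cmod z)\<^sup>2)"
  unfolding complex_norm_square by (rule mult.commute)

lemma psd_entry_le_diag:
  assumes p: "psd ds X"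
  shows "cmod (X a b) \<le> Re (X a a) + Re (X b b)"
proof (cases "a \<in> basis ds \<and> b \<in> basis ds")
  case False
  then have "X a b = 0" using p psd_herm herm_is_op is_op_outside by blast
  then show ?thesis using psd_diag_nonneg[OF p] by simp
next
  case True
  show ?thesis
  proof (cases "a = b")
    case True
    have "cmod (X a a) = Re (X a a)"
      using psd_diag_nonneg[OF p, of a] herm_diag_real[OF psd_herm[OF p], of a]
      by (metis abs_of_nonneg norm_of_real)
    then show ?thesis using psd_diag_nonneg[OF p, of a] True by simp
  next
    case ne: False
    show ?thesis
    proof (cases "X a b = 0")
      case True then show ?thesis using psd_diag_nonneg[OF p] by simp
    next
      case nz: False
      define r where "r = cmod (X a b)"
      have r0: "r > 0" using nz by (simp add: r_def)
      define e where "e = - X b a / complex_of_real r"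
      have hb: "X b a = cnj (X a b)" using herm_cnj[OF psd_herm[OF p]] by blast
      have q: "qform ds X (\<lambda>x. (if x = a then 1 else 0) + (if x = b then e else 0))
         = X a a + X a b * e + cnj e * X b a + cnj e * X b b * e"
        using qform_two_point[OF conjunct1[OF True] conjunct2[OF True], of X 1 e] by simp
      have e1: "X a b * e = - complex_of_real r"
      proof -
        have "X a b * e = - (X a b * cnj (X a b)) / complex_of_real r" by (simp add: e_def hb)
        also have "\<dots> = - complex_of_real (r\<^sup>2) / complex_of_real r"
          unfolding r_def complex_norm_square by simp
        also have "\<dots> = - complex_of_real r" using r0 by (simp add: power2_eq_square)
        finally show ?thesis .
      qed
      have e2: "cnj e * X b a = - complex_of_real r"
      proof -
        have "cnj e * X b a = cnj (X a b * e)" by (simp add: hb)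
        then show ?thesis using e1 by simp
      qed
      have ce: "cnj e * e = 1"
      proof -
        have "cmod e = cmod (X b a) / r" using r0 by (simp add: e_def norm_divide)
        also have "\<dots> = 1" using r0 by (simp add: hb r_def)
        finally have "cmod e = 1" .
        then show ?thesis by (simp add: cnj_mult_self)
      qed
      have e3: "cnj e * X b b * e = X b b" using ce by (simp add: mult_ac)
      have "0 \<le> Re (qform ds X (\<lambda>x. (if x = a then 1 else 0) + (if x = b then e else 0)))"
        by (rule psd_qform_nonneg[OF p])
      then have "0 \<le> Re (X a a) - 2 * r + Re (X b b)"
        unfolding q e1 e2 e3 by simp
      then show ?thesis using psd_diag_nonneg[OF p, of a] psd_diag_nonneg[OF p, of b] r_def by simp
    qed
  qed
qed

lemma psd_zero_diag_row:
  assumes p: "psd ds X" and z: "X a a = 0"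
  shows "X a b = 0"
proof (rule ccontr)
  assume nz: "X a b \<noteq> 0"
  have ab: "a \<in> basis ds" "b \<in> basis ds" using nz is_op_outside[OF herm_is_op[OF psd_herm[OF p]]] by blast+
  have ne: "a \<noteq> b" using nz z by auto
  have hb: "X b a = cnj (X a b)" using herm_cnj[OF psd_herm[OF p]] by blast
  define r where "r = (cmod (X a b))\<^sup>2"
  have r0: "r > 0" using nz by (simp add: r_def)
  define s where "s = (Re (X b b) + 1) / r"
  define c where "c = - complex_of_real s * X a b"
  have q: "qform ds X (\<lambda>x. (if x = a then c else 0) + (if x = b then 1 else 0))
     = cnj c * X a a * c + cnj c * X a b + X b a * c + X b b"
    using qform_two_point[OF ab, of X c 1] by simp
  have cc: "cnj (X a b) * X a b = complex_of_real r" unfolding r_def by (rule cnj_mult_self)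
  have e1: "cnj c * X a b = - complex_of_real (s * r)"
  proof -
    have "cnj c * X a b = - complex_of_real s * (cnj (X a b) * X a b)" by (simp add: c_def)
    then show ?thesis unfolding cc by simp
  qed
  have e2: "X b a * c = - complex_of_real (s * r)"
  proof -
    have "X b a * c = - complex_of_real s * (cnj (X a b) * X a b)" by (simp add: c_def hb)
    then show ?thesis unfolding cc by simp
  qed
  have sr: "s * r = Re (X b b) + 1" using r0 by (simp add: s_def)
  have "0 \<le> Re (qform ds X (\<lambda>x. (if x = a then c else 0) + (if x = b then 1 else 0)))"
    by (rule psd_qform_nonneg[OF p])
  then have "0 \<le> - 2 * (s * r) + Re (X b b)" unfolding q e1 e2 z by (simp add: mult.commute)
  then show False using sr psd_diag_nonneg[OF p, of b] by simp
qed

lemma psd_trace_real: "psd ds X \<Longrightarrow> trace ds X = complex_of_real (Re (trace ds X))"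
proof -
  assume p: "psd ds X"
  have "Im (trace ds X) = 0" unfolding trace_def using herm_diag_Im[OF psd_herm[OF p]] by (simp add: Im_sum)
  then show ?thesis by (simp add: complex_eq_iff)
qed

lemma psd_trace_nonneg: "psd ds X \<Longrightarrow> 0 \<le> Re (trace ds X)"
  unfolding trace_def by (simp add: Re_sum sum_nonneg psd_diag_nonneg)

lemma psd_diag_le_trace: "psd ds X \<Longrightarrow> a \<in> basis ds \<Longrightarrow> Re (X a a) \<le> Re (trace ds X)"
  unfolding trace_def Re_sum
  by (rule member_le_sum) (auto simp: psd_diag_nonneg)

lemma psd_entry_le_trace: "psd ds X \<Longrightarrow> cmod (X a b) \<le> 2 * Re (trace ds X)"
proof -
  assume p: "psd ds X"
  show ?thesis
  proof (cases "a \<in> basis ds \<and> b \<in> basis ds")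
    case True
    then show ?thesis using psd_entry_le_diag[OF p, of a b] psd_diag_le_trace[OF p, of a] psd_diag_le_trace[OF p, of b]
      by simp
  next
    case False
    then have "X a b = 0" using p psd_herm herm_is_op is_op_outside by blast
    then show ?thesis using psd_trace_nonneg[OF p] by simp
  qed
qed

lemma psd_trace_zero:
  assumes p: "psd ds X" and t: "Re (trace ds X) = 0"
  shows "X = op_zero"
proof -
  have d: "Re (X a a) = 0" if "a \<in> basis ds" for a
  proof -
    have "Re (trace ds X) = (\<Sum>a\<in>basis ds. Re (X a a))" by (simp add: trace_def Re_sum)
    then have "(\<Sum>a\<in>basis ds. Re (X a a)) = 0" using t by simp
    then show ?thesis using sum_nonneg_eq_0_iff[of "basis ds" "\<lambda>a. Re (X a a)"] psd_diag_nonneg[OF p] that by auto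
  qed
  have "X a b = 0" for a b
  proof (cases "a \<in> basis ds")
    case True
    then have "X a a = 0" using d herm_diag_real[OF psd_herm[OF p], of a] by simp
    then show ?thesis using psd_zero_diag_row[OF p] by blast
  next
    case False then show ?thesis using p psd_herm herm_is_op is_op_outside by blast
  qed
  then show ?thesis by (auto simp: op_zero_def)
qed

definition rank_one :: "nat list \<Rightarrow> (nat list \<Rightarrow> complex) \<Rightarrow> op" where
  "rank_one ds u = (\<lambda>a b. if a \<in> basis ds \<and> b \<in> basis ds then u a * cnj (u b) else 0)"

lemma psd_rank_one: "psd ds (rank_one ds u)"
proof -
  have h: "herm ds (rank_one ds u)"
    by (rule hermI) (auto simp: rank_one_def is_op_def)
  have "0 \<le> Re (qform ds (rank_one ds u) v)" for v
  proof -
    have "qform ds (rank_one ds u) v = (\<Sum>a\<in>basis ds. \<Sum>b\<in>basis ds. (cnj (v a) * u a) * (cnj (u b) * v b))"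
      unfolding qform_def rank_one_def by (intro sum.cong) (auto simp: mult_ac)
    also have "\<dots> = (\<Sum>a\<in>basis ds. cnj (v a) * u a) * (\<Sum>b\<in>basis ds. cnj (u b) * v b)"
      by (simp add: sum_product)
    also have "\<dots> = cnj (\<Sum>b\<in>basis ds. cnj (u b) * v b) * (\<Sum>b\<in>basis ds. cnj (u b) * v b)"
      by (simp add: cnj_sum mult.commute)
    finally show ?thesis unfolding cnj_mult_self by simp
  qed
  then show ?thesis using h by (simp add: psd_iff_qform)
qed

lemma hs_rank_one: "hs ds Q (rank_one ds u) = Re (qform ds Q u)"
proof -
  have "(\<Sum>a\<in>basis ds. \<Sum>b\<in>basis ds. Q a b * rank_one ds u b a) = qform ds Q u"
    unfolding qform_def rank_one_def by (intro sum.cong) (auto simp: mult_ac)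
  then show ?thesis by (simp add: hs_def)
qed

lemma psd_if_hs_nonneg:
  assumes "herm ds Q" "\<And>p. psd ds p \<Longrightarrow> 0 \<le> hs ds Q p"
  shows "psd ds Q"
  using assms psd_rank_one hs_rank_one by (simp add: psd_iff_qform) (metis)

lemma psd_schur_complement:
  assumes p: "psd ds P" and a0: "a0 \<in> basis ds" and pos: "0 < Re (P a0 a0)"
  shows "psd ds (op_diff P (op_scale (1 / Re (P a0 a0)) (\<lambda>a b. P a a0 * P a0 b)))"
    (is "psd ds ?P'")
proof -
  define pr where "pr = Re (P a0 a0)"
  define R where "R = (\<lambda>a b. P a a0 * P a0 b)"
  have hP: "herm ds P" using psd_herm[OF p] .
  have Pd: "P a0 a0 = complex_of_real pr" unfolding pr_def by (rule herm_diag_real[OF hP])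
  have pr0: "0 < pr" using pos pr_def by simp
  have hR: "herm ds R"
  proof (rule hermI)
    show "is_op ds R" unfolding is_op_def R_def
      using is_op_outside[OF herm_is_op[OF hP]] by auto
    fix a b show "R a b = cnj (R b a)"
      unfolding R_def using herm_cnj[OF hP, of a a0] herm_cnj[OF hP, of a0 b] by (simp add: mult.commute)
  qed
  have "0 \<le> Re (qform ds ?P' u)" for u
  proof -
    define g where "g = (\<Sum>b\<in>basis ds. P a0 b * u b)"
    have col: "cnj (u a) * P a a0 = cnj (P a0 a * u a)" for a
      using herm_cnj[OF hP, of a a0] by (simp add: mult.commute)
    have g_cnj: "(\<Sum>a\<in>basis ds. cnj (u a) * P a a0) = cnj g"
      unfolding g_def cnj_sum col by simp
    have "qform ds R u = (\<Sum>a\<in>basis ds. \<Sum>b\<in>basis ds. (cnj (u a) * P a a0) * (P a0 b * u b))"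
      unfolding qform_def R_def by (intro sum.cong) (auto simp: mult_ac)
    also have "\<dots> = cnj g * g" unfolding sum_product[symmetric] g_cnj g_def by simp
    finally have qR: "qform ds R u = cnj g * g" .
    define c where "c = - g / complex_of_real pr"
    \<comment> \<open>The quadratic form of the complement is that of \<open>P\<close> at the shifted vector \<open>u + c e\<^sub>a\<^sub>0\<close>.\<close>
    have "qform ds P (\<lambda>x. u x + (if x = a0 then c else 0))
        = qform ds P u + c * cnj g + cnj c * g + cnj c * P a0 a0 * c"
      using sesq_delta_right[OF a0, of P u c] sesq_delta_left[OF a0, of P c u]
        sesq_delta_delta[OF a0 a0, of P c c] g_cnj
      by (simp add: qform_sesq sesq_add_left sesq_add_right g_def)
    also have "\<dots> = qform ds P u - cnj g * g / complex_of_real pr"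
      using pr0 by (simp add: c_def Pd field_simps)
    also have "\<dots> = qform ds ?P' u"
      by (simp add: qform_diff qform_scale qR R_def[symmetric] pr_def)
    finally show ?thesis using psd_qform_nonneg[OF p, of "\<lambda>x. u x + (if x = a0 then c else 0)"] by simp
  qed
  moreover have "herm ds ?P'" unfolding R_def[symmetric] by (intro herm_diff hP herm_scale hR)
  ultimately show ?thesis by (simp add: psd_iff_qform)
qed

lemma hs_column_outer:
  assumes "herm ds P"
  shows "hs ds (\<lambda>a b. P a a0 * P a0 b) Q = Re (qform ds Q (\<lambda>x. P x a0))"
proof -
  have entry: "P a a0 * P a0 b * Q b a = cnj (P b a0) * Q b a * P a a0" for a b
    using herm_cnj[OF assms, of a0 b] by (simp add: mult_ac)
  have "(\<Sum>a\<in>basis ds. \<Sum>b\<in>basis ds. P a a0 * P a0 b * Q b a)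
      = (\<Sum>b\<in>basis ds. \<Sum>a\<in>basis ds. cnj (P b a0) * Q b a * P a a0)"
    unfolding entry by (rule sum.swap)
  then show ?thesis by (simp add: hs_def qform_def)
qed

text \<open>Induction on the support of \<open>P\<close>: one Schur complement step removes a basis vector
  from the support and splits off a rank-one term whose pairing with \<open>Q\<close> is a value of
  the quadratic form of \<open>Q\<close>.\<close>

lemma hs_psd_nonneg_on_support:
  assumes "finite K" "K \<subseteq> basis ds" "psd ds P" "psd ds Q"
    and "\<forall>a b. a \<notin> K \<or> b \<notin> K \<longrightarrow> P a b = 0"
  shows "0 \<le> hs ds P Q"
  using assms
proof (induction K arbitrary: P)
  case empty
  then have "P = op_zero" by (auto simp: op_zero_def)
  then show ?case by (simp add: hs_def)
next
  case (insert a0 K)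
  have a0: "a0 \<in> basis ds" using insert.prems by auto
  have hP: "herm ds P" using psd_herm[OF insert.prems(2)] .
  show ?case
  proof (cases "P a0 a0 = 0")
    case True
    have "P a0 b = 0" "P b a0 = 0" for b
      using psd_zero_diag_row[OF insert.prems(2) True] herm_cnj[OF hP, of b a0] by auto
    then have "\<forall>a b. a \<notin> K \<or> b \<notin> K \<longrightarrow> P a b = 0"
      using insert.prems(4) by (metis insert_iff)
    then show ?thesis using insert.prems by (intro insert.IH) auto
  next
    case False
    define pr where "pr = Re (P a0 a0)"
    have Pd: "P a0 a0 = complex_of_real pr" unfolding pr_def by (rule herm_diag_real[OF hP])
    have "0 \<le> pr" using psd_diag_nonneg[OF insert.prems(2)] by (simp add: pr_def)
    moreover have "pr \<noteq> 0" using False Pd by auto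
    ultimately have pr0: "0 < pr" by simp
    define R where "R = (\<lambda>a b. P a a0 * P a0 b)"
    define P' where "P' = op_diff P (op_scale (1 / pr) R)"
    have "psd ds P'"
      using psd_schur_complement[OF insert.prems(2) a0, folded pr_def R_def] pr0 by (simp add: P'_def)
    moreover have "\<forall>a b. a \<notin> K \<or> b \<notin> K \<longrightarrow> P' a b = 0"
    proof (intro allI impI)
      fix a b assume ab: "a \<notin> K \<or> b \<notin> K"
      show "P' a b = 0"
      proof (cases "a = a0 \<or> b = a0")
        case True
        then show ?thesis using pr0 by (auto simp: P'_def R_def Pd)
      next
        case False
        then have "P a b = 0" "P a a0 = 0 \<or> P a0 b = 0" using ab insert.prems(4) by auto
        then show ?thesis by (auto simp: P'_def R_def)
      qed
    qed
    ultimately have "0 \<le> hs ds P' Q" using insert.prems by (intro insert.IH) auto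
    moreover have "hs ds P Q = hs ds P' Q + (1 / pr) * hs ds R Q"
      unfolding P'_def hs_diff_left hs_scale_left by simp
    ultimately show ?thesis
      using hs_column_outer[OF hP] psd_qform_nonneg[OF insert.prems(3)] pr0 by (simp add: R_def)
  qed
qed

lemma hs_psd_nonneg: "psd ds P \<Longrightarrow> psd ds Q \<Longrightarrow> 0 \<le> hs ds P Q"
  by (rule hs_psd_nonneg_on_support[OF finite_basis order_refl])
    (auto intro: is_op_outside[OF herm_is_op[OF psd_herm]])

lemma hs_self_eq: "herm ds X \<Longrightarrow> hs ds X X = (\<Sum>a\<in>basis ds. \<Sum>b\<in>basis ds. (cmod (X a b))\<^sup>2)"
proof -
  assume h: "herm ds X"
  have t: "X a b * X b a = complex_of_real ((cmod (X a b))\<^sup>2)" for a b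
  proof -
    have e: "X b a = cnj (X a b)" by (rule herm_cnj[OF h])
    show ?thesis unfolding e complex_norm_square by (rule refl)
  qed
  show ?thesis unfolding hs_def t by (simp add: Re_sum)
qed

lemma hs_self_nonneg: "herm ds X \<Longrightarrow> 0 \<le> hs ds X X"
  by (simp add: hs_self_eq sum_nonneg)

lemma hs_self_zero: "herm ds X \<Longrightarrow> hs ds X X = 0 \<Longrightarrow> X = op_zero"
proof -
  assume h: "herm ds X" and z: "hs ds X X = 0"
  have "X a b = 0" for a b
  proof (cases "a \<in> basis ds \<and> b \<in> basis ds")
    case True
    have z2: "(\<Sum>a\<in>basis ds. \<Sum>b\<in>basis ds. (cmod (X a b))\<^sup>2) = 0" using z hs_self_eq[OF h] by simp
    have "(\<Sum>b\<in>basis ds. (cmod (X a b))\<^sup>2) = 0"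
      using z2 sum_nonneg_eq_0_iff[of "basis ds" "\<lambda>a. \<Sum>b\<in>basis ds. (cmod (X a b))\<^sup>2"] True
      by (simp add: sum_nonneg)
    then have "(cmod (X a b))\<^sup>2 = 0"
      using sum_nonneg_eq_0_iff[of "basis ds" "\<lambda>b. (cmod (X a b))\<^sup>2"] True by simp
    then show ?thesis by simp
  next
    case False then show ?thesis using is_op_outside[OF herm_is_op[OF h]] by blast
  qed
  then show ?thesis by (auto simp: op_zero_def)
qed

lemma hs_self_entry_bound: "herm ds X \<Longrightarrow> a \<in> basis ds \<Longrightarrow> b \<in> basis ds \<Longrightarrow> (cmod (X a b))\<^sup>2 \<le> hs ds X X"
proof -
  assume h: "herm ds X" and a: "a \<in> basis ds" and b: "b \<in> basis ds"
  have "(cmod (X a b))\<^sup>2 \<le> (\<Sum>b\<in>basis ds. (cmod (X a b))\<^sup>2)"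
    by (rule member_le_sum[OF b]) auto
  also have "\<dots> \<le> (\<Sum>a\<in>basis ds. \<Sum>b\<in>basis ds. (cmod (X a b))\<^sup>2)"
    by (rule member_le_sum[OF a, of "\<lambda>a. \<Sum>b\<in>basis ds. (cmod (X a b))\<^sup>2"]) (auto intro: sum_nonneg)
  finally show ?thesis using hs_self_eq[OF h] by simp
qed

lemma entry_le_hs: "herm ds Y \<Longrightarrow> a \<in> basis ds \<Longrightarrow> b \<in> basis ds \<Longrightarrow> cmod (Y a b) \<le> 1 + hs ds Y Y"
proof -
  assume h: "herm ds Y" and a: "a \<in> basis ds" and b: "b \<in> basis ds"
  have "(cmod (Y a b))\<^sup>2 \<le> hs ds Y Y" by (rule hs_self_entry_bound[OF h a b])
  moreover have "cmod (Y a b) \<le> 1 + (cmod (Y a b))\<^sup>2"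
  proof (cases "cmod (Y a b) \<le> 1")
    case True then show ?thesis by (simp add: add_increasing2)
  next
    case False
    then have "cmod (Y a b) \<le> cmod (Y a b) * cmod (Y a b)" by (simp add: mult_le_cancel_left1)
    then show ?thesis by (simp add: power2_eq_square)
  qed
  ultimately show ?thesis by linarith
qed

lemma trace_le_hs: "herm ds Y \<Longrightarrow> cmod (trace ds Y) \<le> real (card (basis ds)) * (1 + hs ds Y Y)"
proof -
  assume h: "herm ds Y"
  have "cmod (trace ds Y) \<le> (\<Sum>a\<in>basis ds. cmod (Y a a))" unfolding trace_def by (rule norm_sum)
  also have "\<dots> \<le> (\<Sum>a\<in>basis ds. 1 + hs ds Y Y)" by (intro sum_mono entry_le_hs[OF h]) auto
  finally show ?thesis by simp
qed

definition id_op :: "nat list \<Rightarrow> op" where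
  "id_op ds = (\<lambda>a b. if a = b \<and> a \<in> basis ds then 1 else 0)"

lemma herm_id_op: "herm ds (id_op ds)"
  by (rule hermI) (auto simp: id_op_def is_op_def)

lemma qform_id_op: "qform ds (id_op ds) u = complex_of_real (\<Sum>a\<in>basis ds. (cmod (u a))\<^sup>2)"
proof -
  have "qform ds (id_op ds) u = (\<Sum>a\<in>basis ds. cnj (u a) * u a)"
  proof -
    have "qform ds (id_op ds) u = (\<Sum>a\<in>basis ds. \<Sum>b\<in>basis ds. if b = a then cnj (u a) * u a else 0)"
      unfolding qform_def id_op_def by (intro sum.cong) auto
    then show ?thesis by (simp add: sum.delta)
  qed
  then show ?thesis by (simp add: cnj_mult_self)
qed

lemma psd_id_op: "psd ds (id_op ds)"
  using herm_id_op by (simp add: psd_iff_qform qform_id_op sum_nonneg)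

lemma idt_id_op: "idt d (id_op ds) = id_op (d # ds)"
proof (intro ext)
  fix a b show "idt d (id_op ds) a b = id_op (d # ds) a b"
    unfolding idt_def id_op_def by (cases a; cases b) auto
qed

lemma ptr_head_id_op: "ptr_head d (id_op (d # ds)) = op_scale (real d) (id_op ds)"
  by (intro ext) (simp add: ptr_head_def id_op_def)

lemma id_op_Nil: "id_op [] = scalar1"
  by (intro ext) (auto simp: id_op_def scalar1_def)

lemma qform_bound:
  fixes u :: "nat list \<Rightarrow> complex"
  shows "cmod (qform ds X u) \<le> (\<Sum>a\<in>basis ds. \<Sum>b\<in>basis ds. cmod (X a b)) * (\<Sum>a\<in>basis ds. (cmod (u a))\<^sup>2)"
proof -
  define N where "N = (\<Sum>a\<in>basis ds. (cmod (u a))\<^sup>2)"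
  have uN: "(cmod (u a))\<^sup>2 \<le> N" if "a \<in> basis ds" for a
    unfolding N_def by (rule member_le_sum[OF that]) auto
  have pr: "cmod (u a) * cmod (u b) \<le> N" if "a \<in> basis ds" "b \<in> basis ds" for a b
  proof -
    have "cmod (u a) * cmod (u b) \<le> ((cmod (u a))\<^sup>2 + (cmod (u b))\<^sup>2) / 2"
      using sum_squares_bound[of "cmod (u a)" "cmod (u b)"] by (simp add: power2_eq_square)
    then show ?thesis using uN[OF that(1)] uN[OF that(2)] by simp
  qed
  have "cmod (qform ds X u) \<le> (\<Sum>a\<in>basis ds. \<Sum>b\<in>basis ds. cmod (cnj (u a) * X a b * u b))"
    unfolding qform_def by (rule order_trans[OF norm_sum sum_mono[OF norm_sum]])
  also have "\<dots> \<le> (\<Sum>a\<in>basis ds. \<Sum>b\<in>basis ds. cmod (X a b) * N)"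
  proof (intro sum_mono)
    fix a b assume a: "a \<in> basis ds" and b: "b \<in> basis ds"
    have "cmod (cnj (u a) * X a b * u b) = cmod (X a b) * (cmod (u a) * cmod (u b))"
      by (simp add: norm_mult)
    also have "\<dots> \<le> cmod (X a b) * N" using pr[OF a b] by (simp add: mult_left_mono)
    finally show "cmod (cnj (u a) * X a b * u b) \<le> cmod (X a b) * N" .
  qed
  also have "\<dots> = (\<Sum>a\<in>basis ds. \<Sum>b\<in>basis ds. cmod (X a b)) * N"
    by (simp add: sum_distrib_right)
  finally show ?thesis unfolding N_def .
qed

lemma herm_le_scaled_id: "herm ds X \<Longrightarrow> \<exists>k. psd ds (op_diff (op_scale k (id_op ds)) X)"
proof -
  assume h: "herm ds X"
  define k where "k = (\<Sum>a\<in>basis ds. \<Sum>b\<in>basis ds. cmod (X a b))"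
  have "0 \<le> Re (qform ds (op_diff (op_scale k (id_op ds)) X) u)" for u
  proof -
    define N where "N = (\<Sum>a\<in>basis ds. (cmod (u a))\<^sup>2)"
    have "Re (qform ds X u) \<le> cmod (qform ds X u)" by (rule complex_Re_le_cmod)
    also have "\<dots> \<le> k * N" unfolding k_def N_def by (rule qform_bound)
    finally have "Re (qform ds X u) \<le> k * N" .
    then show ?thesis by (simp add: qform_diff qform_scale qform_id_op N_def)
  qed
  moreover have "herm ds (op_diff (op_scale k (id_op ds)) X)" by (intro herm_diff herm_scale herm_id_op h)
  ultimately show ?thesis by (auto simp: psd_iff_qform)
qed


section \<open>Chains, combs and testers\<close>

lemma Ld_Suc: "Ld w v (Suc t) = w (Suc t) # Td w v (Suc t)"
  by (simp add: Td_def)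

lemma Td_Suc: "Td w v (Suc t) = v (Suc t) # Ld w v t"
  by (simp add: Td_def)

lemma Ld_eq: "1 \<le> t \<Longrightarrow> Ld w v t = w t # Td w v t"
  by (cases t) (auto simp: Td_def)

lemma Td_eq: "1 \<le> t \<Longrightarrow> Td w v t = v t # Ld w v (t - 1)"
  by (simp add: Td_def)

definition is_chain :: "(nat \<Rightarrow> nat) \<Rightarrow> (nat \<Rightarrow> nat) \<Rightarrow> nat \<Rightarrow> real \<Rightarrow> (nat \<Rightarrow> op) \<Rightarrow> bool" where
  "is_chain w v T l Y \<longleftrightarrow> Y 0 = op_scale l scalar1 \<and>
     (\<forall>t\<in>{1..T}. ptr_head (w t) (Y t) = idt (v t) (Y (t - 1)))"

definition is_psd_chain :: "(nat \<Rightarrow> nat) \<Rightarrow> (nat \<Rightarrow> nat) \<Rightarrow> nat \<Rightarrow> real \<Rightarrow> (nat \<Rightarrow> op) \<Rightarrow> bool" where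
  "is_psd_chain w v T l Y \<longleftrightarrow> is_chain w v T l Y \<and> (\<forall>t\<in>{1..T}. psd (Ld w v t) (Y t))"

definition is_tester :: "(nat \<Rightarrow> nat) \<Rightarrow> (nat \<Rightarrow> nat) \<Rightarrow> nat \<Rightarrow> (nat \<Rightarrow> op) \<Rightarrow> bool" where
  "is_tester w v T \<tau> \<longleftrightarrow> (\<forall>t\<in>{1..T}. psd (Td w v t) (\<tau> t)) \<and>
     trace (Td w v 1) (\<tau> 1) = 1 \<and>
     (\<forall>t\<in>{2..T}. ptr_head (v t) (\<tau> t) = idt (w (t - 1)) (\<tau> (t - 1)))"

lemma SG_eq: "SG w v T = {idt (w T) (\<tau> T) | \<tau>. is_tester w v T \<tau>}"
  by (simp add: SG_def is_tester_def)

lemma hs_tester_chain: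
  assumes tp: "is_tester w v T \<tau>" and ce: "is_chain w v T l Y"
  shows "1 \<le> t \<Longrightarrow> t \<le> T \<Longrightarrow> hs (Ld w v t) (idt (w t) (\<tau> t)) (Y t) = l"
proof (induction t)
  case 0 then show ?case by simp
next
  case (Suc t)
  have eqY: "ptr_head (w (Suc t)) (Y (Suc t)) = idt (v (Suc t)) (Y t)"
    using ce Suc.prems by (auto simp: is_chain_def)
  have "hs (Ld w v (Suc t)) (idt (w (Suc t)) (\<tau> (Suc t))) (Y (Suc t))
      = hs (Td w v (Suc t)) (\<tau> (Suc t)) (idt (v (Suc t)) (Y t))"
    unfolding Ld_Suc hs_idt eqY ..
  also have "\<dots> = hs (Ld w v t) (Y t) (ptr_head (v (Suc t)) (\<tau> (Suc t)))"
    unfolding Td_Suc by (subst hs_commute) (rule hs_idt)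
  finally have step: "hs (Ld w v (Suc t)) (idt (w (Suc t)) (\<tau> (Suc t))) (Y (Suc t))
      = hs (Ld w v t) (Y t) (ptr_head (v (Suc t)) (\<tau> (Suc t)))" .
  show ?case
  proof (cases "t = 0")
    case True
    have Y0: "Y 0 = op_scale l scalar1" using ce by (simp add: is_chain_def)
    have tr: "trace [v 1] (\<tau> 1) = 1" using tp by (simp add: is_tester_def Td_def)
    have "ptr_head (v 1) (\<tau> 1) [] [] = trace [v 1] (\<tau> 1)"
      by (simp add: ptr_head_def trace_def sum_basis_Cons)
    then show ?thesis using step True Y0 tr by (simp add: hs_scalar1)
  next
    case False
    have eqt: "ptr_head (v (Suc t)) (\<tau> (Suc t)) = idt (w t) (\<tau> t)"
      using tp Suc.prems False by (auto simp: is_tester_def)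
    have "hs (Ld w v t) (Y t) (idt (w t) (\<tau> t)) = l"
      using Suc.IH Suc.prems False by (simp add: hs_commute)
    then show ?thesis using step eqt by simp
  qed
qed

lemma SG_psd: "s \<in> SG w v T \<Longrightarrow> 1 \<le> T \<Longrightarrow> psd (Ld w v T) s"
  by (auto simp: SG_eq is_tester_def Ld_eq intro!: psd_idt)

lemma hs_SG_chain:
  assumes "s \<in> SG w v T" "1 \<le> T" "is_chain w v T l Y"
  shows "hs (Ld w v T) s (Y T) = l"
proof -
  obtain \<tau> where "s = idt (w T) (\<tau> T)" "is_tester w v T \<tau>" using assms(1) unfolding SG_eq by blast
  then show ?thesis using hs_tester_chain[OF _ assms(3) assms(2) order_refl] by blast
qed

lemma is_chain_add: "is_chain w v T l1 Y1 \<Longrightarrow> is_chain w v T l2 Y2 \<Longrightarrow>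
   is_chain w v T (l1 + l2) (\<lambda>t. op_add (Y1 t) (Y2 t))"
  by (simp add: is_chain_def ptr_head_add idt_add op_add_scale)

lemma is_chain_scale: "is_chain w v T l Y \<Longrightarrow> is_chain w v T (r * l) (\<lambda>t. op_scale r (Y t))"
  by (simp add: is_chain_def ptr_head_scale idt_scale op_scale_scale)

lemma is_psd_chain_add: "is_psd_chain w v T l1 Y1 \<Longrightarrow> is_psd_chain w v T l2 Y2 \<Longrightarrow>
   is_psd_chain w v T (l1 + l2) (\<lambda>t. op_add (Y1 t) (Y2 t))"
  by (simp add: is_psd_chain_def is_chain_add psd_add)

lemma is_psd_chain_scale: "is_psd_chain w v T l Y \<Longrightarrow> 0 \<le> r \<Longrightarrow> is_psd_chain w v T (r * l) (\<lambda>t. op_scale r (Y t))"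
  by (simp add: is_psd_chain_def is_chain_scale psd_scale)

lemma is_psd_chain_Chn:
  assumes cp: "is_psd_chain w v T 1 Y" and T: "1 \<le> T"
  shows "Y T \<in> Chn w v T"
proof -
  have ce: "is_chain w v T 1 Y" and ps: "\<forall>t\<in>{1..T}. psd (Ld w v t) (Y t)" using cp by (auto simp: is_psd_chain_def)
  have Y0: "Y 0 = scalar1" using ce by (simp add: is_chain_def)
  show ?thesis unfolding Chn_def
  proof (intro CollectI conjI exI[of _ Y])
    show "psd (Ld w v T) (Y T)" using ps T by auto
    show "Y T = Y T" ..
    show "\<forall>t\<in>{1..T}. psd (Ld w v t) (Y t)" by fact
    show "\<forall>t\<in>{2..T}. ptr_head (w t) (Y t) = idt (v t) (Y (t - 1))" using ce by (auto simp: is_chain_def)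
    show "ptr_head (w 1) (Y 1) = idt (v 1) scalar1" using ce T Y0 by (auto simp: is_chain_def)
  qed
qed

fun id_chain_weight :: "(nat \<Rightarrow> nat) \<Rightarrow> nat \<Rightarrow> real" where
  "id_chain_weight w 0 = 1"
| "id_chain_weight w (Suc t) = id_chain_weight w t / real (w (Suc t))"

definition id_chain :: "(nat \<Rightarrow> nat) \<Rightarrow> (nat \<Rightarrow> nat) \<Rightarrow> nat \<Rightarrow> op" where
  "id_chain w v t = op_scale (id_chain_weight w t) (id_op (Ld w v t))"

lemma id_chain_weight_pos: "\<forall>s\<in>{1..t}. 1 \<le> w s \<Longrightarrow> id_chain_weight w t > 0"
proof (induction t)
  case 0 then show ?case by simp
next
  case (Suc t)
  have "id_chain_weight w t > 0" using Suc by auto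
  moreover have "1 \<le> w (Suc t)" using Suc.prems by auto
  ultimately show ?case by simp
qed

lemma is_psd_chain_id_chain:
  assumes "\<forall>s\<in>{1..T}. 1 \<le> w s"
  shows "is_psd_chain w v T 1 (id_chain w v)"
proof -
  have "ptr_head (w t) (id_chain w v t) = idt (v t) (id_chain w v (t - 1))" if t: "t \<in> {1..T}" for t
  proof -
    obtain s where s: "t = Suc s" using t by (cases t) auto
    have "1 \<le> w t" using assms t by blast
    then have w1: "real (w t) \<noteq> 0" by simp
    have "ptr_head (w t) (id_chain w v t) = op_scale (id_chain_weight w t * real (w t)) (id_op (v t # Ld w v s))"
      unfolding id_chain_def s by (simp add: ptr_head_scale ptr_head_id_op op_scale_scale)
    also have "\<dots> = op_scale (id_chain_weight w s) (id_op (v t # Ld w v s))" using w1 s by simp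
    also have "\<dots> = idt (v t) (id_chain w v (t - 1))" unfolding id_chain_def s by (simp add: idt_scale idt_id_op)
    finally show ?thesis .
  qed
  moreover have "id_chain w v 0 = op_scale 1 scalar1" by (simp add: id_chain_def id_op_Nil)
  moreover have "psd (Ld w v t) (id_chain w v t)" if "t \<in> {1..T}" for t
  proof -
    have "\<forall>s\<in>{1..t}. 1 \<le> w s" using assms that by auto
    then have "id_chain_weight w t > 0" by (rule id_chain_weight_pos)
    then show ?thesis unfolding id_chain_def by (intro psd_scale psd_id_op) auto
  qed
  ultimately show ?thesis by (simp add: is_psd_chain_def is_chain_def)
qed

lemma hs_SG_id_chain:
  assumes "s \<in> SG w v T" "1 \<le> T" "\<forall>t\<in>{1..T}. 1 \<le> w t"
  shows "hs (Ld w v T) s (id_chain w v T) = 1"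
  using hs_SG_chain[OF assms(1,2)] is_psd_chain_id_chain[OF assms(3)] by (simp add: is_psd_chain_def)

lemma lamS_SG_chain:
  assumes "SG w v T \<noteq> {}" "1 \<le> T" "is_chain w v T l Y"
  shows "lamS (Ld w v T) (SG w v T) (Y T) = l"
proof -
  have "(\<lambda>\<phi>. hs (Ld w v T) \<phi> (Y T)) ` SG w v T = {l}"
    using hs_SG_chain[OF _ assms(2,3)] assms(1) by auto
  then show ?thesis by (simp add: lamS_def)
qed

lemma bdd_above_hs_SG:
  assumes T: "1 \<le> T" and w: "\<forall>t\<in>{1..T}. 1 \<le> w t" and chi: "herm (Ld w v T) chi"
  shows "bdd_above ((\<lambda>\<phi>. hs (Ld w v T) \<phi> chi) ` SG w v T)"
proof -
  define \<kappa> where "\<kappa> = id_chain_weight w T"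
  have \<kappa>: "0 < \<kappa>" unfolding \<kappa>_def using w by (intro id_chain_weight_pos) auto
  obtain k where k: "psd (Ld w v T) (op_diff (op_scale k (id_op (Ld w v T))) chi)"
    using herm_le_scaled_id[OF chi] by blast
  have "op_scale k (id_op (Ld w v T)) = op_scale (k / \<kappa>) (id_chain w v T)"
    using \<kappa> by (simp add: id_chain_def \<kappa>_def op_scale_scale)
  then have "hs (Ld w v T) s chi \<le> k / \<kappa>" if s: "s \<in> SG w v T" for s
    using hs_psd_nonneg[OF SG_psd[OF s T] k] hs_SG_id_chain[OF s T w]
    by (simp add: hs_diff_right hs_scale_right)
  then show ?thesis by (intro bdd_aboveI2) auto
qed

lemma lin_span_base: "x \<in> A \<Longrightarrow> x \<in> lin_span A"
  unfolding lin_span_def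
  by (intro CollectI exI[of _ "{x}"] exI[of _ "\<lambda>_. 1"]) auto

lemma lin_span_add: "x \<in> lin_span A \<Longrightarrow> y \<in> lin_span A \<Longrightarrow> op_add x y \<in> lin_span A"
proof -
  assume "x \<in> lin_span A" "y \<in> lin_span A"
  then obtain F1 r1 F2 r2 where F: "finite F1" "F1 \<subseteq> A" "finite F2" "F2 \<subseteq> A"
    and x: "x = (\<lambda>a b. \<Sum>c\<in>F1. complex_of_real (r1 c) * c a b)"
    and y: "y = (\<lambda>a b. \<Sum>c\<in>F2. complex_of_real (r2 c) * c a b)"
    unfolding lin_span_def by blast
  define r where "r = (\<lambda>c. (if c \<in> F1 then r1 c else 0) + (if c \<in> F2 then r2 c else 0))"
  have "op_add x y = (\<lambda>a b. \<Sum>c\<in>F1 \<union> F2. complex_of_real (r c) * c a b)"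
  proof (intro ext)
    fix a b
    have "(\<Sum>c\<in>F1 \<union> F2. complex_of_real (r c) * c a b)
       = (\<Sum>c\<in>F1 \<union> F2. (if c \<in> F1 then complex_of_real (r1 c) * c a b else 0))
         + (\<Sum>c\<in>F1 \<union> F2. (if c \<in> F2 then complex_of_real (r2 c) * c a b else 0))"
      unfolding r_def sum.distrib[symmetric] by (intro sum.cong) (auto simp: distrib_right)
    also have "\<dots> = (\<Sum>c\<in>F1. complex_of_real (r1 c) * c a b) + (\<Sum>c\<in>F2. complex_of_real (r2 c) * c a b)"
      using F by (simp add: sum.If_cases Int_absorb1 Int_absorb2)
    finally show "op_add x y a b = (\<Sum>c\<in>F1 \<union> F2. complex_of_real (r c) * c a b)"
      by (simp add: x y)
  qed
  then have "\<exists>F' r'. op_add x y = (\<lambda>a b. \<Sum>c\<in>F'. complex_of_real (r' c) * c a b) \<and> finite F' \<and> F' \<subseteq> A"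
    using F by (intro exI[of _ "F1 \<union> F2"] exI[of _ r]) auto
  then show ?thesis unfolding lin_span_def by simp
qed

lemma lin_span_scale: "x \<in> lin_span A \<Longrightarrow> op_scale s x \<in> lin_span A"
proof -
  assume "x \<in> lin_span A"
  then obtain F r where F: "finite F" "F \<subseteq> A"
    and x: "x = (\<lambda>a b. \<Sum>c\<in>F. complex_of_real (r c) * c a b)"
    unfolding lin_span_def by blast
  have "op_scale s x = (\<lambda>a b. \<Sum>c\<in>F. complex_of_real (s * r c) * c a b)"
    by (intro ext) (simp add: x sum_distrib_left mult_ac)
  then have "\<exists>F' r'. op_scale s x = (\<lambda>a b. \<Sum>c\<in>F'. complex_of_real (r' c) * c a b) \<and> finite F' \<and> F' \<subseteq> A"
    using F by (intro exI[of _ F] exI[of _ "\<lambda>c. s * r c"]) auto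
  then show ?thesis unfolding lin_span_def by simp
qed

text \<open>A psd chain is a difference of two positive multiples of combs: shift it by a multiple of
  the identity chain and normalise.\<close>

lemma psd_chain_in_lin_span:
  assumes T: "1 \<le> T" and w: "\<forall>t\<in>{1..T}. 1 \<le> w t" and Y: "is_psd_chain w v T l Y"
  shows "Y T \<in> lin_span (Chn w v T)"
proof -
  define k where "k = \<bar>l\<bar> + 1"
  have lk: "0 < l + k" by (simp add: k_def)
  define Y1 where "Y1 t = op_scale (1 / (l + k)) (op_add (Y t) (op_scale k (id_chain w v t)))" for t
  have "is_psd_chain w v T (l + k * 1) (\<lambda>t. op_add (Y t) (op_scale k (id_chain w v t)))"
    by (intro is_psd_chain_add Y is_psd_chain_scale is_psd_chain_id_chain w) (simp add: k_def)
  then have "is_psd_chain w v T (1 / (l + k) * (l + k * 1)) Y1"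
    unfolding Y1_def using lk by (intro is_psd_chain_scale) auto
  then have "Y1 T \<in> Chn w v T" using lk by (intro is_psd_chain_Chn[OF _ T]) simp
  moreover have "id_chain w v T \<in> Chn w v T" by (rule is_psd_chain_Chn[OF is_psd_chain_id_chain[OF w] T])
  moreover have "Y T = op_add (op_scale (l + k) (Y1 T)) (op_scale (- k) (id_chain w v T))"
  proof -
    have "complex_of_real l + complex_of_real k \<noteq> 0"
      using lk by (metis of_real_add of_real_eq_0_iff less_irrefl)
    then show ?thesis by (intro ext) (simp add: Y1_def field_simps)
  qed
  ultimately show ?thesis by (simp add: lin_span_add lin_span_scale lin_span_base)
qed

text \<open>The recursion
  \<open>\<tau>\<^sub>t\<^sub>+\<^sub>1 = p\<^sub>t\<^sub>+\<^sub>1 + I\<^sub>v\<^sub>t\<^sub>+\<^sub>1 \<otimes> (I\<^sub>w\<^sub>t \<otimes> \<tau>\<^sub>t - Tr\<^sub>v\<^sub>t\<^sub>+\<^sub>1 p\<^sub>t\<^sub>+\<^sub>1) / v\<^sub>t\<^sub>+\<^sub>1\<close>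
  is chosen so that \<open>Tr\<^sub>v\<^sub>t\<^sub>+\<^sub>1 \<tau>\<^sub>t\<^sub>+\<^sub>1 = I\<^sub>w\<^sub>t \<otimes> \<tau>\<^sub>t\<close> holds exactly; the value at \<open>0\<close> is irrelevant.\<close>

fun tester_lift :: "(nat \<Rightarrow> nat) \<Rightarrow> (nat \<Rightarrow> nat) \<Rightarrow> (nat \<Rightarrow> op) \<Rightarrow> nat \<Rightarrow> op" where
  "tester_lift w v p 0 = op_zero"
| "tester_lift w v p (Suc 0) = p 1"
| "tester_lift w v p (Suc (Suc k)) = op_add (p (Suc (Suc k)))
     (op_scale (1 / real (v (Suc (Suc k)))) (idt (v (Suc (Suc k)))
       (op_diff (idt (w (Suc k)) (tester_lift w v p (Suc k))) (ptr_head (v (Suc (Suc k))) (p (Suc (Suc k)))))))"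

lemma tester_lift_above:
  assumes psd_p: "\<forall>k\<in>{1..T}. psd (Td w v k) (p k)"
    and psd_link: "\<forall>k. 1 \<le> k \<and> k < T \<longrightarrow>
      psd (Ld w v k) (op_diff (idt (w k) (p k)) (ptr_head (v (Suc k)) (p (Suc k))))"
    and "1 \<le> t" "t \<le> T"
  shows "psd (Td w v t) (op_diff (tester_lift w v p t) (p t))"
  using assms(3,4)
proof (induction t rule: nat_less_induct)
  case (1 t)
  show ?case
  proof (cases "t = 1")
    case True
    then show ?thesis by (simp add: psd_zero op_zero_def[symmetric])
  next
    case False
    then obtain k where t: "t = Suc (Suc k)" using "1.prems" by (cases t; cases "t - 1") auto
    define D where "D = op_diff (idt (w (Suc k)) (tester_lift w v p (Suc k))) (ptr_head (v t) (p t))"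
    have prev: "psd (Td w v (Suc k)) (op_diff (tester_lift w v p (Suc k)) (p (Suc k)))"
      by (rule "1.IH"[rule_format]) (use "1.prems" t in auto)
    have "D = op_add (idt (w (Suc k)) (op_diff (tester_lift w v p (Suc k)) (p (Suc k))))
        (op_diff (idt (w (Suc k)) (p (Suc k))) (ptr_head (v (Suc (Suc k))) (p (Suc (Suc k)))))"
      unfolding D_def t by (intro ext) (simp add: idt_diff)
    moreover have "psd (Ld w v (Suc k)) (idt (w (Suc k)) (op_diff (tester_lift w v p (Suc k)) (p (Suc k))))"
      unfolding Ld_Suc by (rule psd_idt[OF prev])
    moreover have "psd (Ld w v (Suc k))
        (op_diff (idt (w (Suc k)) (p (Suc k))) (ptr_head (v (Suc (Suc k))) (p (Suc (Suc k)))))"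
      using psd_link[rule_format, of "Suc k"] "1.prems" t by simp
    ultimately have "psd (Ld w v (Suc k)) D" by (simp add: psd_add)
    then have "psd (Td w v t) (op_scale (1 / real (v t)) (idt (v t) D))"
      by (auto simp: t Td_Suc intro!: psd_scale psd_idt)
    moreover have "op_diff (tester_lift w v p t) (p t) = op_scale (1 / real (v t)) (idt (v t) D)"
      unfolding t D_def by (intro ext) simp
    ultimately show ?thesis by (simp only:)
  qed
qed

lemma tester_lift_is_tester:
  assumes dims: "\<forall>t\<in>{1..T}. 1 \<le> v t"
    and psd_p: "\<forall>k\<in>{1..T}. psd (Td w v k) (p k)"
    and psd_link: "\<forall>k. 1 \<le> k \<and> k < T \<longrightarrow>
      psd (Ld w v k) (op_diff (idt (w k) (p k)) (ptr_head (v (Suc k)) (p (Suc k))))"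
    and trace_p: "trace (Td w v 1) (p 1) = 1"
  shows "is_tester w v T (tester_lift w v p)"
  unfolding is_tester_def
proof (intro conjI ballI)
  fix t assume t: "t \<in> {1..T}"
  have "op_add (p t) (op_diff (tester_lift w v p t) (p t)) = tester_lift w v p t"
    by (intro ext) simp
  then show "psd (Td w v t) (tester_lift w v p t)"
    using psd_add[OF _ tester_lift_above[OF psd_p psd_link]] psd_p t by (metis atLeastAtMost_iff)
next
  show "trace (Td w v 1) (tester_lift w v p 1) = 1" using trace_p by simp
next
  fix t assume t: "t \<in> {2..T}"
  then obtain k where k: "t = Suc (Suc k)" by (cases t; cases "t - 1") auto
  have "1 \<le> v t" using dims t by auto
  then show "ptr_head (v t) (tester_lift w v p t) = idt (w (t - 1)) (tester_lift w v p (t - 1))"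
    unfolding k by (intro ext) (simp add: ptr_head_add ptr_head_scale ptr_head_idt op_scale_scale)
qed

section \<open>Entrywise limits\<close>

lemma finite_bounded_convergent_subseq:
  fixes s :: "nat \<Rightarrow> 'k \<Rightarrow> complex"
  assumes "finite K" "\<forall>k\<in>K. \<exists>B. \<forall>n. cmod (s n k) \<le> B"
  shows "\<exists>r L. strict_mono r \<and> (\<forall>k\<in>K. (\<lambda>n. s (r n) k) \<longlonglongrightarrow> L k)"
  using assms
proof (induction K arbitrary: s)
  case empty
  show ?case by (intro exI[of _ id]) (auto simp: strict_mono_def)
next
  case (insert k0 K)
  obtain r1 L where r1: "strict_mono r1" and L: "\<forall>k\<in>K. (\<lambda>n. s (r1 n) k) \<longlonglongrightarrow> L k"
    using insert.IH[of s] insert.prems by auto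
  obtain B where B: "\<forall>n. cmod (s n k0) \<le> B" using insert.prems by auto
  have "bounded (range (\<lambda>n. s (r1 n) k0))"
    unfolding bounded_iff using B by auto
  then obtain l r2 where r2: "strict_mono r2" and l: "((\<lambda>n. s (r1 n) k0) \<circ> r2) \<longlonglongrightarrow> l"
    using bounded_imp_convergent_subsequence by blast
  define L' where "L' = L(k0 := l)"
  have "\<forall>k\<in>insert k0 K. (\<lambda>n. s ((r1 \<circ> r2) n) k) \<longlonglongrightarrow> L' k"
  proof
    fix k assume k: "k \<in> insert k0 K"
    show "(\<lambda>n. s ((r1 \<circ> r2) n) k) \<longlonglongrightarrow> L' k"
    proof (cases "k = k0")
      case True then show ?thesis using l by (simp add: L'_def comp_def)
    next
      case False
      then have "k \<in> K" using k by auto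
      then have "((\<lambda>n. s (r1 n) k) \<circ> r2) \<longlonglongrightarrow> L k" using L r2 LIMSEQ_subseq_LIMSEQ by blast
      then show ?thesis using False by (simp add: L'_def comp_def)
    qed
  qed
  then show ?case using strict_mono_o[OF r1 r2] by blast
qed

definition entrywise_lim :: "(nat \<Rightarrow> op) \<Rightarrow> op \<Rightarrow> bool" where
  "entrywise_lim Ys Yl \<longleftrightarrow> (\<forall>a b. (\<lambda>n. Ys n a b) \<longlonglongrightarrow> Yl a b)"

lemma entrywise_lim_unique: "entrywise_lim Xs X \<Longrightarrow> entrywise_lim Xs Y \<Longrightarrow> X = Y"
  unfolding entrywise_lim_def by (intro ext) (meson LIMSEQ_unique)

lemma entrywise_lim_const: "entrywise_lim (\<lambda>n. X) X"
  by (auto simp: entrywise_lim_def)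

lemma entrywise_lim_diff: "entrywise_lim Xs Xl \<Longrightarrow> entrywise_lim Ys Yl \<Longrightarrow> entrywise_lim (\<lambda>n. op_diff (Xs n) (Ys n)) (op_diff Xl Yl)"
  by (auto simp: entrywise_lim_def intro: tendsto_diff)

lemma entrywise_lim_ptr_head: "entrywise_lim Xs Xl \<Longrightarrow> entrywise_lim (\<lambda>n. ptr_head d (Xs n)) (ptr_head d Xl)"
  unfolding entrywise_lim_def ptr_head_def by (auto intro!: tendsto_sum)

lemma tendsto_if_const: "(P \<Longrightarrow> f \<longlonglongrightarrow> a) \<Longrightarrow> (\<lambda>n. if P then f n else 0) \<longlonglongrightarrow> (if P then a else 0)"
  by (cases P) auto

lemma entrywise_lim_idt: "entrywise_lim Xs Xl \<Longrightarrow> entrywise_lim (\<lambda>n. idt d (Xs n)) (idt d Xl)"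
  unfolding entrywise_lim_def
proof (intro allI)
  fix a b assume h: "\<forall>a b. (\<lambda>n. Xs n a b) \<longlonglongrightarrow> Xl a b"
  show "(\<lambda>n. idt d (Xs n) a b) \<longlonglongrightarrow> idt d Xl a b"
  proof (cases a)
    case Nil then show ?thesis by (simp add: idt_def)
  next
    case (Cons i a')
    show ?thesis
    proof (cases b)
      case Nil then show ?thesis using Cons by (simp add: idt_def)
    next
      case (Cons j b')
      have e1: "(\<lambda>n. idt d (Xs n) a b) = (\<lambda>n. if i = j \<and> i < d then Xs n a' b' else 0)"
        using \<open>a = i # a'\<close> Cons by (simp add: idt_def)
      have e2: "idt d Xl a b = (if i = j \<and> i < d then Xl a' b' else 0)"
        using \<open>a = i # a'\<close> Cons by (simp add: idt_def)
      show ?thesis unfolding e1 e2 by (rule tendsto_if_const) (use h in blast)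
    qed
  qed
qed

lemma entrywise_lim_hs: "entrywise_lim Xs Xl \<Longrightarrow> entrywise_lim Ys Yl \<Longrightarrow> (\<lambda>n. hs ds (Xs n) (Ys n)) \<longlonglongrightarrow> hs ds Xl Yl"
  unfolding entrywise_lim_def hs_def
  by (rule tendsto_Re, rule tendsto_sum, rule tendsto_sum, rule tendsto_mult) auto

lemma entrywise_lim_qform: "entrywise_lim Xs Xl \<Longrightarrow> (\<lambda>n. qform ds (Xs n) u) \<longlonglongrightarrow> qform ds Xl u"
  unfolding entrywise_lim_def qform_def by (auto intro!: tendsto_sum tendsto_mult)

lemma psd_entrywise_lim:
  assumes p: "\<And>n. psd ds (Xs n)" and t: "entrywise_lim Xs Xl"
  shows "psd ds Xl"
proof -
  have iso: "is_op ds Xl"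
    unfolding is_op_def
  proof (intro allI impI)
    fix a b assume ab: "a \<notin> basis ds \<or> b \<notin> basis ds"
    have "\<And>n. Xs n a b = 0" using is_op_outside[OF herm_is_op[OF psd_herm[OF p]] ab] .
    then have "(\<lambda>n. Xs n a b) \<longlonglongrightarrow> 0" by simp
    moreover have "(\<lambda>n. Xs n a b) \<longlonglongrightarrow> Xl a b" using t by (simp add: entrywise_lim_def)
    ultimately show "Xl a b = 0" using LIMSEQ_unique by blast
  qed
  have hc: "Xl a b = cnj (Xl b a)" for a b
  proof -
    have "(\<lambda>n. Xs n a b) \<longlonglongrightarrow> Xl a b" using t by (simp add: entrywise_lim_def)
    moreover have "(\<lambda>n. cnj (Xs n b a)) \<longlonglongrightarrow> cnj (Xl b a)"
      using t by (auto simp: entrywise_lim_def intro: tendsto_cnj)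
    moreover have "(\<lambda>n. Xs n a b) = (\<lambda>n. cnj (Xs n b a))"
    proof
      fix n show "Xs n a b = cnj (Xs n b a)" by (rule herm_cnj[OF psd_herm[OF p]])
    qed
    ultimately show ?thesis using LIMSEQ_unique by simp
  qed
  have q: "0 \<le> Re (qform ds Xl u)" for u
  proof -
    have "(\<lambda>n. Re (qform ds (Xs n) u)) \<longlonglongrightarrow> Re (qform ds Xl u)"
      by (intro tendsto_Re entrywise_lim_qform[OF t])
    moreover have "\<exists>N. \<forall>n\<ge>N. 0 \<le> Re (qform ds (Xs n) u)" using psd_qform_nonneg[OF p] by blast
    ultimately show ?thesis by (rule LIMSEQ_le_const)
  qed
  have "herm ds Xl" using iso hc by (rule hermI)
  then show ?thesis using q by (simp add: psd_iff_qform)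
qed

section \<open>Separating candidate chains from the dominance constraint\<close>

lemma le_of_quadratic_interpolation:
  fixes m p r :: real
  assumes "\<And>u. 0 \<le> u \<Longrightarrow> u \<le> 1 \<Longrightarrow> m \<le> (1 - u) * (1 - u) * m + 2 * (1 - u) * u * p + u * u * r"
  shows "m \<le> p"
proof (rule ccontr)
  assume "\<not> m \<le> p"
  then have mp: "p < m" by simp
  define C where "C = m - 2 * p + r"
  have key: "(1 - u) * (1 - u) * m + 2 * (1 - u) * u * p + u * u * r - m = u * (2 * (p - m) + u * C)" for u
    by (simp add: C_def algebra_simps)
  show False
  proof (cases "C \<le> 0")
    case True
    have "m \<le> (1 - 1) * (1 - 1) * m + 2 * (1 - 1) * 1 * p + 1 * 1 * r" using assms[of 1] by simp
    then have "0 \<le> 1 * (2 * (p - m) + 1 * C)" using key[of 1] by linarith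
    then show False using True mp by simp
  next
    case False
    define u where "u = min 1 ((m - p) / C)"
    have u0: "0 < u" using False mp by (simp add: u_def)
    have u1: "u \<le> 1" by (simp add: u_def)
    have uC: "u * C \<le> m - p" using False by (simp add: u_def min_def field_simps split: if_splits)
    have "m \<le> (1 - u) * (1 - u) * m + 2 * (1 - u) * u * p + u * u * r" using assms u0 u1 by simp
    then have "0 \<le> u * (2 * (p - m) + u * C)" using key[of u] by linarith
    moreover have "2 * (p - m) + u * C < 0" using uC mp by (smt (verit))
    ultimately show False using u0 by (simp add: mult_less_0_iff zero_le_mult_iff)
  qed
qed

locale separation =
  fixes w v :: "nat \<Rightarrow> nat" and T :: nat and X :: op and mu :: real
  assumes T_pos: "1 \<le> T"
    and dims_pos: "\<forall>t\<in>{1..T}. 1 \<le> v t \<and> 1 \<le> w t"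
    and herm_X: "herm (Ld w v T) X"
begin

text \<open>A candidate \<open>Z\<close> consists of a normalisation \<open>Z 0 = l \<cdot> 1\<close> with \<open>l \<le> mu\<close>, would-be
  chain elements \<open>Z 1, \<dots>, Z T\<close> and a slack \<open>Z (T + 1)\<close> for \<open>Z T - X \<ge> 0\<close>. Its residual
  vanishes exactly when \<open>Z\<close> is a chain dominating \<open>X\<close>; slot \<open>t \<le> T\<close> of the residual lives
  on \<open>Td w v t\<close> and slot \<open>T + 1\<close> on \<open>Ld w v T\<close>.\<close>

definition slot_dims :: "nat \<Rightarrow> nat list" where
  "slot_dims t = (if t \<le> T then Td w v t else Ld w v T)"

definition var_dims :: "nat \<Rightarrow> nat list" where
  "var_dims t = (if t = 0 then [] else if t \<le> T then Ld w v t else Ld w v T)"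

definition candidates :: "tup set" where
  "candidates = {Z. (\<exists>l. l \<le> mu \<and> Z 0 = op_scale l scalar1) \<and> (\<forall>t\<in>{1..T}. psd (Ld w v t) (Z t)) \<and>
      psd (Ld w v T) (Z (Suc T)) \<and> (\<forall>t>Suc T. Z t = op_zero)}"

definition lin_residual :: "tup \<Rightarrow> tup" where
  "lin_residual Z t = (if 1 \<le> t \<and> t \<le> T then op_diff (ptr_head (w t) (Z t)) (idt (v t) (Z (t - 1)))
     else if t = Suc T then op_diff (Z T) (Z (Suc T)) else op_zero)"

definition residual :: "tup \<Rightarrow> tup" where
  "residual Z t = (if t = Suc T then op_diff (lin_residual Z t) X else lin_residual Z t)"

definition pairing :: "tup \<Rightarrow> tup \<Rightarrow> real" where
  "pairing W V = (\<Sum>t\<in>{1..Suc T}. hs (slot_dims t) (W t) (V t))"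

definition residual_norm :: "tup \<Rightarrow> real" where
  "residual_norm Z = pairing (residual Z) (residual Z)"

definition base_point :: tup where
  "base_point = (\<lambda>t. if t = 0 then op_scale mu scalar1 else op_zero)"

definition mix :: "real \<Rightarrow> tup \<Rightarrow> tup \<Rightarrow> tup" where
  "mix u Z1 Z2 = (\<lambda>t. op_add (op_scale (1 - u) (Z1 t)) (op_scale u (Z2 t)))"

definition support :: "(nat \<times> nat list \<times> nat list) set" where
  "support = {(t, a, b). t \<le> Suc T \<and> a \<in> basis (var_dims t) \<and> b \<in> basis (var_dims t)}"

lemma candidatesD:
  assumes "Z \<in> candidates"
  shows "\<exists>l. l \<le> mu \<and> Z 0 = op_scale l scalar1" and "\<And>t. 1 \<le> t \<Longrightarrow> t \<le> T \<Longrightarrow> psd (Ld w v t) (Z t)"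
    and "psd (Ld w v T) (Z (Suc T))" and "\<And>t. Suc T < t \<Longrightarrow> Z t = op_zero"
  using assms by (auto simp: candidates_def)

lemma base_point_in_candidates: "base_point \<in> candidates"
  unfolding candidates_def base_point_def using T_pos by (auto simp: psd_zero)

lemma herm_candidate_prev:
  assumes "Z \<in> candidates" "1 \<le> t" "t \<le> T"
  shows "herm (Ld w v (t - 1)) (Z (t - 1))"
proof (cases "t = 1")
  case True
  obtain l where "Z 0 = op_scale l scalar1" using candidatesD(1)[OF assms(1)] by blast
  then show ?thesis using True herm_scalar by simp
next
  case False
  then show ?thesis using candidatesD(2)[OF assms(1), of "t - 1"] assms psd_herm by simp
qed

lemma herm_residual:
  assumes Z: "Z \<in> candidates" and t: "t \<in> {1..Suc T}"
  shows "herm (slot_dims t) (residual Z t)"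
proof (cases "t \<le> T")
  case True
  have t1: "1 \<le> t" using t by auto
  have "herm (Td w v t) (ptr_head (w t) (Z t))"
    using candidatesD(2)[OF Z t1 True] by (auto simp: Ld_eq[OF t1] intro: herm_ptr_head psd_herm)
  moreover have "herm (Td w v t) (idt (v t) (Z (t - 1)))"
    unfolding Td_eq[OF t1] by (rule herm_idt[OF herm_candidate_prev[OF Z t1 True]])
  ultimately show ?thesis using True t1 by (simp add: residual_def lin_residual_def slot_dims_def herm_diff)
next
  case False
  then have "t = Suc T" using t by auto
  moreover have "herm (Ld w v T) (Z T)" "herm (Ld w v T) (Z (Suc T))"
    using candidatesD(2,3)[OF Z] T_pos psd_herm by auto
  ultimately show ?thesis using herm_X by (simp add: residual_def lin_residual_def slot_dims_def herm_diff)
qed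

lemma mix_in_candidates:
  assumes Z1: "Z1 \<in> candidates" and Z2: "Z2 \<in> candidates" and u: "0 \<le> u" "u \<le> 1"
  shows "mix u Z1 Z2 \<in> candidates"
proof -
  obtain l1 l2 where l1: "l1 \<le> mu" "Z1 0 = op_scale l1 scalar1" and l2: "l2 \<le> mu" "Z2 0 = op_scale l2 scalar1"
    using candidatesD(1) Z1 Z2 by blast
  have "mix u Z1 Z2 0 = op_scale ((1 - u) * l1 + u * l2) scalar1"
    by (simp add: mix_def l1 l2 op_scale_scale op_add_scale)
  moreover have "(1 - u) * l1 + u * l2 \<le> (1 - u) * mu + u * mu"
    using l1 l2 u by (intro add_mono mult_left_mono) auto
  ultimately have "\<exists>l\<le>mu. mix u Z1 Z2 0 = op_scale l scalar1"
    by (intro exI[of _ "(1 - u) * l1 + u * l2"]) (simp add: algebra_simps)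
  then show ?thesis
    using Z1 Z2 u unfolding candidates_def mix_def by (auto intro!: psd_add psd_scale)
qed

lemma residual_mix:
  "residual (mix u Z1 Z2) t = op_add (op_scale (1 - u) (residual Z1 t)) (op_scale u (residual Z2 t))"
  by (intro ext) (simp add: residual_def lin_residual_def mix_def ptr_head_add ptr_head_scale
      idt_add idt_scale algebra_simps)

lemma residual_add_lin:
  "residual (\<lambda>t. op_add (Z t) (op_scale s (E t))) t = op_add (residual Z t) (op_scale s (lin_residual E t))"
  by (intro ext) (simp add: residual_def lin_residual_def ptr_head_add ptr_head_scale idt_add idt_scale algebra_simps)

lemma pairing_self_combination:
  "pairing (\<lambda>t. op_add (op_scale a (A t)) (op_scale b (B t))) (\<lambda>t. op_add (op_scale a (A t)) (op_scale b (B t)))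
     = a * a * pairing A A + 2 * a * b * pairing A B + b * b * pairing B B"
  unfolding pairing_def hs_self_combination by (simp only: sum.distrib sum_distrib_left)

lemma pairing_add_scale_right: "pairing W (\<lambda>t. op_add (A t) (op_scale s (B t))) = pairing W A + s * pairing W B"
  unfolding pairing_def hs_add_right hs_scale_right by (simp only: sum.distrib sum_distrib_left)

lemma hs_slot_le_pairing:
  "(\<forall>t\<in>{1..Suc T}. herm (slot_dims t) (A t)) \<Longrightarrow> t \<in> {1..Suc T} \<Longrightarrow> hs (slot_dims t) (A t) (A t) \<le> pairing A A"
  unfolding pairing_def by (rule member_le_sum) (auto simp: hs_self_nonneg)

lemma residual_norm_nonneg: "Z \<in> candidates \<Longrightarrow> 0 \<le> residual_norm Z"
  unfolding residual_norm_def pairing_def by (intro sum_nonneg) (simp add: hs_self_nonneg herm_residual)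

lemma pairing_single_slot:
  "k \<in> {1..Suc T} \<Longrightarrow> (\<And>t. t \<in> {1..Suc T} \<Longrightarrow> t \<noteq> k \<Longrightarrow> V t = op_zero) \<Longrightarrow>
   pairing W V = hs (slot_dims k) (W k) (V k)"
  unfolding pairing_def by (subst sum.remove[of _ k]) (auto intro!: sum.neutral)

lemma pairing_two_slots:
  assumes "k1 \<in> {1..Suc T}" "k2 \<in> {1..Suc T}" "k1 \<noteq> k2"
    and "\<And>t. t \<in> {1..Suc T} \<Longrightarrow> t \<noteq> k1 \<Longrightarrow> t \<noteq> k2 \<Longrightarrow> V t = op_zero"
  shows "pairing W V = hs (slot_dims k1) (W k1) (V k1) + hs (slot_dims k2) (W k2) (V k2)"
proof -
  have "pairing W V = hs (slot_dims k1) (W k1) (V k1) + (\<Sum>t\<in>{1..Suc T} - {k1}. hs (slot_dims t) (W t) (V t))"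
    unfolding pairing_def using assms by (subst sum.remove[of _ k1]) auto
  also have "(\<Sum>t\<in>{1..Suc T} - {k1}. hs (slot_dims t) (W t) (V t))
      = hs (slot_dims k2) (W k2) (V k2) + (\<Sum>t\<in>{1..Suc T} - {k1} - {k2}. hs (slot_dims t) (W t) (V t))"
    using assms by (subst sum.remove[of _ k2]) auto
  also have "(\<Sum>t\<in>{1..Suc T} - {k1} - {k2}. hs (slot_dims t) (W t) (V t)) = 0"
    using assms by (intro sum.neutral) auto
  finally show ?thesis by simp
qed

lemma trace_candidate:
  assumes Z: "Z \<in> candidates" and t: "1 \<le> t" "t \<le> T"
  shows "Re (trace (Ld w v t) (Z t))
    = Re (trace (slot_dims t) (residual Z t)) + real (v t) * Re (trace (Ld w v (t - 1)) (Z (t - 1)))"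
proof -
  have "residual Z t = op_diff (ptr_head (w t) (Z t)) (idt (v t) (Z (t - 1)))"
    using t by (simp add: residual_def lin_residual_def)
  moreover have "trace (Td w v t) (ptr_head (w t) (Z t)) = trace (Ld w v t) (Z t)"
    using trace_ptr_head[of "Td w v t" "w t" "Z t"] Ld_eq[OF t(1)] by simp
  moreover have "trace (Td w v t) (idt (v t) (Z (t - 1))) = of_nat (v t) * trace (Ld w v (t - 1)) (Z (t - 1))"
    unfolding Td_eq[OF t(1)] by (rule trace_idt)
  ultimately show ?thesis using t by (simp add: slot_dims_def trace_diff)
qed

lemma finite_support: "finite support"
proof -
  have "support \<subseteq> {..Suc T} \<times> (\<Union>t\<le>Suc T. basis (var_dims t)) \<times> (\<Union>t\<le>Suc T. basis (var_dims t))"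
    by (auto simp: support_def)
  then show ?thesis by (rule finite_subset) auto
qed

lemma candidate_outside_support:
  assumes Z: "Z \<in> candidates" and k: "(t, a, b) \<notin> support"
  shows "Z t a b = 0"
proof -
  consider "t = 0" | "1 \<le> t \<and> t \<le> Suc T" | "Suc T < t" by linarith
  then show ?thesis
  proof cases
    case 1
    obtain l where "Z 0 = op_scale l scalar1" using candidatesD(1)[OF Z] by blast
    moreover have "a \<noteq> [] \<or> b \<noteq> []" using k 1 by (auto simp: support_def var_dims_def)
    ultimately show ?thesis using 1 by (auto simp: scalar1_def)
  next
    case 2
    have "psd (var_dims t) (Z t)"
      using 2 candidatesD(2,3)[OF Z] by (cases "t = Suc T") (auto simp: var_dims_def)
    moreover have "a \<notin> basis (var_dims t) \<or> b \<notin> basis (var_dims t)" using k 2 by (auto simp: support_def)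
    ultimately show ?thesis using is_op_outside[OF herm_is_op[OF psd_herm]] by blast
  next
    case 3
    then show ?thesis using candidatesD(4)[OF Z] by simp
  qed
qed

lemma hs_residual_le:
  assumes "Z \<in> candidates" "t \<in> {1..Suc T}"
  shows "hs (slot_dims t) (residual Z t) (residual Z t) \<le> residual_norm Z"
  using hs_slot_le_pairing[of "residual Z" t] herm_residual[OF assms(1)] assms(2)
  by (simp add: residual_norm_def)

lemma residual_trace_bound:
  assumes Z: "Z \<in> candidates" "residual_norm Z \<le> B" and t: "t \<in> {1..Suc T}"
  shows "\<bar>Re (trace (slot_dims t) (residual Z t))\<bar> \<le> real (card (basis (slot_dims t))) * (1 + B)"
proof -
  have "\<bar>Re (trace (slot_dims t) (residual Z t))\<bar> \<le> cmod (trace (slot_dims t) (residual Z t))"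
    by (rule abs_Re_le_cmod)
  also have "\<dots> \<le> real (card (basis (slot_dims t))) * (1 + hs (slot_dims t) (residual Z t) (residual Z t))"
    by (rule trace_le_hs[OF herm_residual[OF Z(1) t]])
  also have "\<dots> \<le> real (card (basis (slot_dims t))) * (1 + B)"
    using hs_residual_le[OF Z(1) t] Z(2) by (intro mult_left_mono) auto
  finally show ?thesis .
qed

text \<open>On a sublevel set of the residual norm the traces of the chain elements are bounded:
  \<open>tr Z\<^sub>t = tr (residual slot t) + v\<^sub>t tr Z\<^sub>t\<^sub>-\<^sub>1\<close> with \<open>tr Z\<^sub>t \<ge> 0\<close>, and the normalisation is
  bounded above by \<open>mu\<close>.\<close>

lemma candidate_trace_bounded:
  "t \<le> T \<Longrightarrow> \<exists>C. \<forall>Z\<in>candidates. residual_norm Z \<le> B \<longrightarrow> \<bar>Re (trace (Ld w v t) (Z t))\<bar> \<le> C"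
proof (induction t)
  case 0
  define C1 where "C1 = real (card (basis (slot_dims 1))) * (1 + B)"
  have "\<bar>Re (trace (Ld w v 0) (Z 0))\<bar> \<le> \<bar>mu\<bar> + C1" if Z: "Z \<in> candidates" "residual_norm Z \<le> B" for Z
  proof -
    obtain l where l: "l \<le> mu" "Z 0 = op_scale l scalar1" using candidatesD(1)[OF Z(1)] by blast
    have res: "\<bar>Re (trace (slot_dims 1) (residual Z 1))\<bar> \<le> C1"
      using residual_trace_bound[OF Z, of 1] T_pos by (simp add: C1_def)
    have "0 \<le> Re (trace (Ld w v 1) (Z 1))" by (rule psd_trace_nonneg[OF candidatesD(2)[OF Z(1) order_refl T_pos]])
    also have "\<dots> = Re (trace (slot_dims 1) (residual Z 1)) + real (v 1) * l"
      using trace_candidate[OF Z(1) order_refl T_pos] l by (simp add: trace_scalar)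
    finally have vl: "- C1 \<le> real (v 1) * l" using res by linarith
    have "- C1 \<le> l"
    proof (cases "0 \<le> l")
      case False
      have "1 \<le> v 1" using dims_pos T_pos by auto
      then have "real (v 1) * l \<le> 1 * l" using False by (intro mult_right_mono_neg) auto
      then show ?thesis using vl by simp
    qed (use res in linarith)
    then show ?thesis using l res by (simp add: trace_scalar)
  qed
  then show ?case by blast
next
  case (Suc t)
  obtain C where C: "\<forall>Z\<in>candidates. residual_norm Z \<le> B \<longrightarrow> \<bar>Re (trace (Ld w v t) (Z t))\<bar> \<le> C"
    using Suc by auto
  define Ct where "Ct = real (card (basis (slot_dims (Suc t)))) * (1 + B)"
  have "\<bar>Re (trace (Ld w v (Suc t)) (Z (Suc t)))\<bar> \<le> Ct + real (v (Suc t)) * C"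
    if Z: "Z \<in> candidates" "residual_norm Z \<le> B" for Z
  proof -
    have "0 \<le> Re (trace (Ld w v (Suc t)) (Z (Suc t)))"
      using Suc.prems by (intro psd_trace_nonneg candidatesD(2)[OF Z(1)]) auto
    moreover have "Re (trace (Ld w v (Suc t)) (Z (Suc t)))
        = Re (trace (slot_dims (Suc t)) (residual Z (Suc t))) + real (v (Suc t)) * Re (trace (Ld w v t) (Z t))"
      using trace_candidate[OF Z(1), of "Suc t"] Suc.prems by simp
    moreover have "Re (trace (slot_dims (Suc t)) (residual Z (Suc t))) \<le> Ct"
      using residual_trace_bound[OF Z, of "Suc t"] Suc.prems by (simp add: Ct_def)
    moreover have "real (v (Suc t)) * Re (trace (Ld w v t) (Z t)) \<le> real (v (Suc t)) * C"
      using C Z by (intro mult_left_mono) auto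
    ultimately show ?thesis by linarith
  qed
  then show ?case by blast
qed

lemma candidate_entry_bounded:
  "\<exists>C. \<forall>Z\<in>candidates. residual_norm Z \<le> B \<longrightarrow> cmod (Z t a b) \<le> C"
proof -
  have trace_bound: "\<exists>C. \<forall>Z\<in>candidates. residual_norm Z \<le> B \<longrightarrow> cmod (Z s a b) \<le> 2 * C"
    if s: "1 \<le> s" "s \<le> T" for s
  proof -
    obtain C where C: "\<forall>Z\<in>candidates. residual_norm Z \<le> B \<longrightarrow> \<bar>Re (trace (Ld w v s) (Z s))\<bar> \<le> C"
      using candidate_trace_bounded[OF s(2)] by blast
    have "cmod (Z s a b) \<le> 2 * C" if Z: "Z \<in> candidates" "residual_norm Z \<le> B" for Z
      using psd_entry_le_trace[OF candidatesD(2)[OF Z(1) s], of a b] C Z by force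
    then show ?thesis by blast
  qed
  consider "t = 0" | "1 \<le> t \<and> t \<le> T" | "t = Suc T" | "Suc T < t" by linarith
  then show ?thesis
  proof cases
    case 1
    obtain C where C: "\<forall>Z\<in>candidates. residual_norm Z \<le> B \<longrightarrow> \<bar>Re (trace (Ld w v 0) (Z 0))\<bar> \<le> C"
      using candidate_trace_bounded[of 0] by blast
    have "cmod (Z t a b) \<le> C" if Z: "Z \<in> candidates" "residual_norm Z \<le> B" for Z
    proof -
      obtain l where l: "Z 0 = op_scale l scalar1" using candidatesD(1)[OF Z(1)] by blast
      have "\<bar>Re (trace (Ld w v 0) (Z 0))\<bar> \<le> C" using C Z by blast
      then have "\<bar>l\<bar> \<le> C" using l by (simp add: trace_scalar)
      then show ?thesis using l 1 abs_ge_zero[of l] by (auto simp: scalar1_def simp del: abs_ge_zero)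
    qed
    then show ?thesis by blast
  next
    case 2
    then show ?thesis using trace_bound by blast
  next
    case 3
    obtain C where C: "\<forall>Z\<in>candidates. residual_norm Z \<le> B \<longrightarrow> cmod (Z T a b) \<le> 2 * C"
      using trace_bound[OF T_pos order_refl] by blast
    have "cmod (Z t a b) \<le> 2 * C + cmod (X a b) + (1 + B)" if Z: "Z \<in> candidates" "residual_norm Z \<le> B" for Z
    proof (cases "a \<in> basis (Ld w v T) \<and> b \<in> basis (Ld w v T)")
      case True
      have "Z t a b = Z T a b - X a b - residual Z (Suc T) a b"
        using 3 by (simp add: residual_def lin_residual_def)
      moreover have "cmod (residual Z (Suc T) a b) \<le> 1 + B"
        using entry_le_hs[OF herm_residual[OF Z(1)], of "Suc T" a b] hs_residual_le[OF Z(1), of "Suc T"] Z(2) True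
        by (simp add: slot_dims_def)
      ultimately show ?thesis
        using C Z norm_triangle_ineq4[of "Z T a b - X a b" "residual Z (Suc T) a b"]
          norm_triangle_ineq4[of "Z T a b" "X a b"] by force
    next
      case False
      then have "Z t a b = 0"
        using 3 candidatesD(3)[OF Z(1)] is_op_outside[OF herm_is_op[OF psd_herm]] by blast
      moreover have "0 \<le> 2 * C" using C Z norm_ge_zero order_trans by blast
      moreover have "0 \<le> 1 + B" using residual_norm_nonneg[OF Z(1)] Z(2) by linarith
      ultimately show ?thesis by simp
    qed
    then show ?thesis by blast
  next
    case 4
    then show ?thesis using candidatesD(4) by force
  qed
qed

lemma candidates_closed:
  assumes Zs: "\<And>n. Zs n \<in> candidates" and lim: "\<And>t. entrywise_lim (\<lambda>n. Zs n t) (Z t)"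
  shows "Z \<in> candidates"
proof -
  define l where "l n = Re (Zs n 0 [] [])" for n
  have Zs0: "Zs n 0 = op_scale (l n) scalar1" "l n \<le> mu" for n
  proof -
    obtain l' where "l' \<le> mu" "Zs n 0 = op_scale l' scalar1" using candidatesD(1)[OF Zs] by blast
    moreover from this have "l n = l'" by (simp add: l_def scalar1_def)
    ultimately show "Zs n 0 = op_scale (l n) scalar1" "l n \<le> mu" by auto
  qed
  define l0 where "l0 = Re (Z 0 [] [])"
  have l_lim: "l \<longlonglongrightarrow> l0"
    unfolding l_def l0_def using lim[of 0] by (auto simp: entrywise_lim_def intro: tendsto_Re)
  have "l0 \<le> mu" using Zs0(2) by (intro LIMSEQ_le_const2[OF l_lim]) auto
  moreover have "entrywise_lim (\<lambda>n. Zs n 0) (op_scale l0 scalar1)"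
    unfolding entrywise_lim_def Zs0 op_scale_apply by (intro allI tendsto_mult tendsto_of_real l_lim tendsto_const)
  then have "Z 0 = op_scale l0 scalar1" using entrywise_lim_unique[OF lim[of 0]] by blast
  moreover have "psd (Ld w v t) (Z t)" if "t \<in> {1..T}" for t
    using that by (intro psd_entrywise_lim[OF _ lim] candidatesD(2)[OF Zs]) auto
  moreover have "psd (Ld w v T) (Z (Suc T))"
    by (intro psd_entrywise_lim[OF _ lim] candidatesD(3)[OF Zs])
  moreover have "Z t = op_zero" if "Suc T < t" for t
  proof -
    have "entrywise_lim (\<lambda>n. Zs n t) op_zero"
      using candidatesD(4)[OF Zs that] entrywise_lim_const[of op_zero] by simp
    then show ?thesis using entrywise_lim_unique[OF lim[of t]] by blast
  qed
  ultimately show ?thesis unfolding candidates_def by blast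
qed

lemma residual_norm_tendsto:
  assumes "\<And>t. entrywise_lim (\<lambda>n. Zs n t) (Z t)"
  shows "(\<lambda>n. residual_norm (Zs n)) \<longlonglongrightarrow> residual_norm Z"
proof -
  have "entrywise_lim (\<lambda>n. residual (Zs n) t) (residual Z t)" for t
    unfolding residual_def lin_residual_def
    by (auto intro!: entrywise_lim_diff entrywise_lim_ptr_head entrywise_lim_idt entrywise_lim_const assms)
  then show ?thesis
    unfolding residual_norm_def pairing_def by (intro tendsto_sum entrywise_lim_hs)
qed

text \<open>The residual norm attains its infimum: a minimising sequence is bounded in each of the
  finitely many coordinates of the support, so a subsequence converges entrywise, and the limit
  is again a candidate.\<close>

lemma residual_norm_attains_min: "\<exists>Z\<in>candidates. \<forall>Z'\<in>candidates. residual_norm Z \<le> residual_norm Z'"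
proof -
  define m where "m = Inf (residual_norm ` candidates)"
  have bdd: "bdd_below (residual_norm ` candidates)"
    using residual_norm_nonneg by (intro bdd_belowI[where m=0]) auto
  have m_le: "m \<le> residual_norm Z" if "Z \<in> candidates" for Z
    unfolding m_def using bdd that by (auto intro: cInf_lower)
  have "\<exists>Z\<in>candidates. residual_norm Z < m + inverse (real (Suc n))" for n
    using cInf_less_iff[OF _ bdd, of "m + inverse (real (Suc n))"] base_point_in_candidates
    by (auto simp: m_def)
  then obtain Zs where Zs: "\<And>n. Zs n \<in> candidates"
    and Zs_lt: "\<And>n. residual_norm (Zs n) < m + inverse (real (Suc n))"
    by metis
  have "residual_norm (Zs n) \<le> m + 1" for n
    using Zs_lt[of n] inverse_le_1_iff[of "real (Suc n)"] by linarith
  then have "\<forall>k\<in>support. \<exists>C. \<forall>n. cmod (Zs n (fst k) (fst (snd k)) (snd (snd k))) \<le> C"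
    using candidate_entry_bounded[of "m + 1"] Zs by meson
  then obtain r L where r: "strict_mono r"
    and L: "\<forall>k\<in>support. (\<lambda>n. Zs (r n) (fst k) (fst (snd k)) (snd (snd k))) \<longlonglongrightarrow> L k"
    using finite_bounded_convergent_subseq[OF finite_support,
        of "\<lambda>n k. Zs n (fst k) (fst (snd k)) (snd (snd k))"] by blast
  define Z where "Z t a b = (if (t, a, b) \<in> support then L (t, a, b) else 0)" for t a b
  have lim: "entrywise_lim (\<lambda>n. Zs (r n) t) (Z t)" for t
    unfolding entrywise_lim_def
  proof (intro allI)
    fix a b show "(\<lambda>n. Zs (r n) t a b) \<longlonglongrightarrow> Z t a b"
      using L candidate_outside_support[OF Zs] by (cases "(t, a, b) \<in> support") (force simp: Z_def)+
  qed
  have Z: "Z \<in> candidates" by (rule candidates_closed[OF Zs lim])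
  have "residual_norm Z \<le> m"
  proof (rule LIMSEQ_le[OF residual_norm_tendsto[OF lim]])
    show "(\<lambda>n. m + inverse (real (Suc n))) \<longlonglongrightarrow> m"
      using tendsto_add[OF tendsto_const LIMSEQ_inverse_real_of_nat, of m] by simp
    have "residual_norm (Zs (r n)) \<le> m + inverse (real (Suc n))" for n
    proof -
      have "inverse (real (Suc (r n))) \<le> inverse (real (Suc n))"
        using seq_suble[OF r, of n] by (simp add: le_imp_inverse_le)
      then show ?thesis using Zs_lt[of "r n"] by linarith
    qed
    then show "\<exists>N. \<forall>n\<ge>N. residual_norm (Zs (r n)) \<le> m + inverse (real (Suc n))" by blast
  qed
  then show ?thesis using Z m_le by (meson order_trans)
qed

theorem separation_dichotomy:
  "(\<exists>Z\<in>candidates. \<forall>t. residual Z t = op_zero) \<or>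
   (\<exists>W \<delta>. 0 < \<delta> \<and> (\<forall>t\<in>{1..Suc T}. herm (slot_dims t) (W t)) \<and>
      (\<forall>Z\<in>candidates. \<delta> \<le> pairing W (residual Z)))"
proof -
  obtain Z0 where Z0: "Z0 \<in> candidates" and min: "\<forall>Z\<in>candidates. residual_norm Z0 \<le> residual_norm Z"
    using residual_norm_attains_min by blast
  have herm0: "\<forall>t\<in>{1..Suc T}. herm (slot_dims t) (residual Z0 t)" using herm_residual[OF Z0] by blast
  show ?thesis
  proof (cases "residual_norm Z0 = 0")
    case True
    have "residual Z0 t = op_zero" for t
    proof (cases "t \<in> {1..Suc T}")
      case True
      then have "hs (slot_dims t) (residual Z0 t) (residual Z0 t) = 0"
        using hs_residual_le[OF Z0 True] hs_self_nonneg[of "slot_dims t" "residual Z0 t"] herm0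
          \<open>residual_norm Z0 = 0\<close> by simp
      then show ?thesis using hs_self_zero herm0 True by blast
    next
      case False
      then show ?thesis by (auto simp: residual_def lin_residual_def)
    qed
    then show ?thesis using Z0 by blast
  next
    case False
    then have pos: "0 < residual_norm Z0" using residual_norm_nonneg[OF Z0] by simp
    \<comment> \<open>Minimality along the segment from \<open>Z0\<close> to \<open>Z\<close> gives the variational inequality.\<close>
    have "residual_norm Z0 \<le> pairing (residual Z0) (residual Z)" if Z: "Z \<in> candidates" for Z
    proof (rule le_of_quadratic_interpolation)
      fix u :: real assume u: "0 \<le> u" "u \<le> 1"
      have "residual_norm Z0 \<le> residual_norm (mix u Z0 Z)" using min mix_in_candidates[OF Z0 Z u] by blast
      also have "residual_norm (mix u Z0 Z) = (1 - u) * (1 - u) * residual_norm Z0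
          + 2 * (1 - u) * u * pairing (residual Z0) (residual Z) + u * u * pairing (residual Z) (residual Z)"
        unfolding residual_norm_def residual_mix by (rule pairing_self_combination)
      finally show "residual_norm Z0 \<le> (1 - u) * (1 - u) * residual_norm Z0
          + 2 * (1 - u) * u * pairing (residual Z0) (residual Z) + u * u * pairing (residual Z) (residual Z)" .
    qed
    then show ?thesis using pos herm0 by blast
  qed
qed

end

section \<open>Testers from separators\<close>

locale separator = separation +
  fixes W :: "nat \<Rightarrow> op" and \<delta> :: real
  assumes \<delta>_pos: "0 < \<delta>"
    and herm_W: "\<forall>t\<in>{1..Suc T}. herm (slot_dims t) (W t)"
    and separates: "\<forall>Z\<in>candidates. \<delta> \<le> pairing W (residual Z)"
begin

lemma herm_W_slot: "t \<in> {1..T} \<Longrightarrow> herm (Td w v t) (W t)"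
  using herm_W[rule_format, of t] by (simp add: slot_dims_def)

lemma herm_W_top: "herm (Ld w v T) (W (Suc T))"
  using herm_W[rule_format, of "Suc T"] by (simp add: slot_dims_def)

text \<open>Adding a psd operator to one slot of a candidate is a recession direction of the set of
  candidates, so a separator pairs nonnegatively with the corresponding linear residual.\<close>

lemma pairing_lin_residual_slot_nonneg:
  assumes p: "psd (var_dims k) p" and k: "1 \<le> k" "k \<le> Suc T"
  shows "0 \<le> pairing W (lin_residual (\<lambda>t. if t = k then p else op_zero))"
proof (rule ccontr)
  define E where "E = (\<lambda>t. if t = k then p else op_zero)"
  assume "\<not> 0 \<le> pairing W (lin_residual (\<lambda>t. if t = k then p else op_zero))"
  then have neg: "pairing W (lin_residual E) < 0" by (simp add: E_def)
  define c where "c = pairing W (residual base_point)"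
  define s where "s = (\<bar>c\<bar> + 1) / (- pairing W (lin_residual E))"
  have s: "0 \<le> s" unfolding s_def using neg by (intro divide_nonneg_pos) auto
  have "(\<lambda>t. op_add (base_point t) (op_scale s (E t))) \<in> candidates"
    using p k s by (cases "k = Suc T") (auto simp: candidates_def base_point_def E_def var_dims_def psd_zero psd_scale)
  then have "\<delta> \<le> pairing W (residual (\<lambda>t. op_add (base_point t) (op_scale s (E t))))"
    using separates by blast
  also have "\<dots> = c + s * pairing W (lin_residual E)"
    unfolding residual_add_lin pairing_add_scale_right c_def ..
  also have "s * pairing W (lin_residual E) = - (\<bar>c\<bar> + 1)" using neg by (simp add: s_def)
  finally show False using \<delta>_pos by linarith
qed

definition top_test :: op where
  "top_test = op_diff op_zero (W (Suc T))"

definition slot_test :: "nat \<Rightarrow> op" where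
  "slot_test k = (if k = T then op_diff (idt (w T) (W T)) top_test
     else op_diff (idt (w k) (W k)) (ptr_head (v (Suc k)) (W (Suc k))))"

lemma herm_top_test: "herm (Ld w v T) top_test"
  unfolding top_test_def by (intro herm_diff herm_zero herm_W_top)

lemma psd_top_test: "psd (Ld w v T) top_test"
proof (rule psd_if_hs_nonneg[OF herm_top_test])
  fix p assume p: "psd (Ld w v T) p"
  have "0 \<le> pairing W (lin_residual (\<lambda>t. if t = Suc T then p else op_zero))"
    using p by (intro pairing_lin_residual_slot_nonneg) (auto simp: var_dims_def)
  also have "\<dots> = hs (slot_dims (Suc T)) (W (Suc T)) (lin_residual (\<lambda>t. if t = Suc T then p else op_zero) (Suc T))"
    by (rule pairing_single_slot) (auto simp: lin_residual_def)
  also have "\<dots> = hs (Ld w v T) top_test p"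
    by (simp add: lin_residual_def slot_dims_def top_test_def hs_diff_zero_right hs_diff_left)
  finally show "0 \<le> hs (Ld w v T) top_test p" .
qed

lemma herm_slot_test: "k \<in> {1..T} \<Longrightarrow> herm (Ld w v k) (slot_test k)"
  using herm_W_slot[of k] herm_W_slot[of "Suc k"] herm_top_test
  by (auto simp: slot_test_def Ld_eq Td_Suc intro!: herm_diff herm_idt herm_ptr_head)

lemma psd_slot_test:
  assumes k: "k \<in> {1..T}"
  shows "psd (Ld w v k) (slot_test k)"
proof (rule psd_if_hs_nonneg[OF herm_slot_test[OF k]])
  fix p assume p: "psd (Ld w v k) p"
  define E where "E = (\<lambda>t. if t = k then p else op_zero)"
  have k1: "1 \<le> k" "k \<le> T" "k - 1 \<noteq> k" using k by auto
  have nonneg: "0 \<le> pairing W (lin_residual E)"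
    unfolding E_def using p k1 by (intro pairing_lin_residual_slot_nonneg) (auto simp: var_dims_def)
  have slot_k: "hs (slot_dims k) (W k) (lin_residual E k) = hs (Ld w v k) (idt (w k) (W k)) p"
    using hs_idt[of "w k" "Td w v k" "W k" p] k1 by (simp add: lin_residual_def E_def slot_dims_def Ld_eq)
  show "0 \<le> hs (Ld w v k) (slot_test k) p"
  proof (cases "k = T")
    case True
    have "pairing W (lin_residual E) = hs (slot_dims k) (W k) (lin_residual E k)
        + hs (slot_dims (Suc T)) (W (Suc T)) (lin_residual E (Suc T))"
      by (rule pairing_two_slots) (use k True in \<open>auto simp: lin_residual_def E_def\<close>)
    also have "hs (slot_dims (Suc T)) (W (Suc T)) (lin_residual E (Suc T)) = - hs (Ld w v T) top_test p"
      using True by (simp add: lin_residual_def E_def slot_dims_def top_test_def hs_diff_left)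
    finally show ?thesis using nonneg slot_k True by (simp add: slot_test_def hs_diff_left)
  next
    case False
    have kS: "Suc k \<le> T" using False k1 by simp
    have "pairing W (lin_residual E) = hs (slot_dims k) (W k) (lin_residual E k)
        + hs (slot_dims (Suc k)) (W (Suc k)) (lin_residual E (Suc k))"
      by (rule pairing_two_slots) (use k kS in \<open>auto simp: lin_residual_def E_def\<close>)
    also have "hs (slot_dims (Suc k)) (W (Suc k)) (lin_residual E (Suc k))
        = - hs (Ld w v k) (ptr_head (v (Suc k)) (W (Suc k))) p"
      using kS hs_idt[of "v (Suc k)" "Ld w v k" p "W (Suc k)"]
      by (simp add: lin_residual_def E_def slot_dims_def Td_Suc hs_diff_zero_right hs_commute)
    finally show ?thesis using nonneg slot_k False by (simp add: slot_test_def hs_diff_left)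
  qed
qed

lemma psd_W:
  assumes "k \<in> {1..T}"
  shows "psd (Td w v k) (W k)"
  using assms
proof (induction "T - k" arbitrary: k)
  case 0
  then have k: "k = T" by simp
  have "idt (w T) (W T) = op_add (slot_test T) top_test" by (intro ext) (simp add: slot_test_def)
  then have "psd (w T # Td w v T) (idt (w T) (W T))"
    using psd_slot_test[of T] psd_top_test T_pos Ld_eq[OF T_pos] by (simp add: psd_add)
  moreover have "1 \<le> w T" using dims_pos T_pos by auto
  ultimately show ?case unfolding k by (rule psd_idt_cancel)
next
  case (Suc j)
  then have k: "1 \<le> k" "k < T" by auto
  have next_psd: "psd (Td w v (Suc k)) (W (Suc k))" using Suc k by auto
  have "idt (w k) (W k) = op_add (slot_test k) (ptr_head (v (Suc k)) (W (Suc k)))"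
    using k by (intro ext) (simp add: slot_test_def)
  then have "psd (w k # Td w v k) (idt (w k) (W k))"
    using psd_slot_test[of k] psd_ptr_head[OF next_psd[unfolded Td_Suc]] k Ld_eq[OF k(1)]
    by (simp add: psd_add)
  moreover have "1 \<le> w k" using dims_pos k by auto
  ultimately show ?case by (rule psd_idt_cancel)
qed

lemma separator_base_point:
  "\<delta> \<le> hs (Ld w v T) top_test X - mu * Re (trace (Td w v 1) (W 1))"
proof -
  have "\<delta> \<le> pairing W (residual base_point)" using separates base_point_in_candidates by blast
  also have "\<dots> = hs (slot_dims 1) (W 1) (residual base_point 1)
      + hs (slot_dims (Suc T)) (W (Suc T)) (residual base_point (Suc T))"
    by (rule pairing_two_slots) (use T_pos in \<open>auto simp: residual_def lin_residual_def base_point_def\<close>)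
  also have "hs (slot_dims 1) (W 1) (residual base_point 1) = - (mu * Re (trace (Td w v 1) (W 1)))"
    using T_pos hs_idt_scalar[of "v 1" "W 1" mu]
    by (simp add: residual_def lin_residual_def base_point_def slot_dims_def Td_def hs_diff_zero_right)
  also have "hs (slot_dims (Suc T)) (W (Suc T)) (residual base_point (Suc T)) = hs (Ld w v T) top_test X"
    using T_pos by (simp add: residual_def lin_residual_def base_point_def slot_dims_def top_test_def
        hs_diff_zero_right hs_diff_left hs_commute)
  finally show ?thesis by simp
qed

text \<open>Taking traces of the slot tests, \<open>tr W\<^sub>k\<^sub>+\<^sub>1 \<le> w\<^sub>k tr W\<^sub>k\<close> and \<open>tr top_test \<le> w\<^sub>T tr W\<^sub>T\<close>;
  so if \<open>tr W\<^sub>1 = 0\<close> then \<open>top_test = 0\<close>, contradicting the separation at the base point.\<close>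

lemma trace_W_first_pos: "0 < Re (trace (Td w v 1) (W 1))"
proof (rule ccontr)
  define tr where "tr k = Re (trace (Td w v k) (W k))" for k
  assume "\<not> 0 < Re (trace (Td w v 1) (W 1))"
  then have tr1: "tr 1 = 0" using psd_trace_nonneg[OF psd_W[of 1]] T_pos by (simp add: tr_def)
  have tr_step: "tr (Suc k) \<le> real (w k) * tr k" if "1 \<le> k" "k < T" for k
  proof -
    have "0 \<le> Re (trace (Ld w v k) (slot_test k))" using psd_slot_test[of k] that by (intro psd_trace_nonneg) auto
    then show ?thesis
      using that by (simp add: tr_def slot_test_def trace_diff Ld_eq[OF that(1)] trace_idt trace_ptr_head Td_Suc)
  qed
  have "tr k = 0" if "1 \<le> k" "k \<le> T" for k
    using that
  proof (induction k rule: dec_induct)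
    case (step k)
    then show ?case using tr_step[of k] psd_trace_nonneg[OF psd_W[of "Suc k"]] by (simp add: tr_def)
  qed (rule tr1)
  then have "tr T = 0" using T_pos by simp
  moreover have "0 \<le> Re (trace (Ld w v T) (slot_test T))" by (intro psd_trace_nonneg psd_slot_test) (use T_pos in auto)
  ultimately have "Re (trace (Ld w v T) top_test) \<le> 0"
    using T_pos by (simp add: tr_def slot_test_def trace_diff Ld_eq[OF T_pos] trace_idt)
  then have "top_test = op_zero"
    using psd_trace_zero[OF psd_top_test] psd_trace_nonneg[OF psd_top_test] by simp
  then show False using separator_base_point tr1 \<delta>_pos by (simp add: tr_def)
qed

text \<open>Normalised by \<open>tr W\<^sub>1\<close>, the slots of \<open>W\<close> are dominated by a tester (\<open>tester_lift\<close>).\<close>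

lemma tester_exceeds:
  assumes X: "psd (Ld w v T) X"
  shows "\<exists>s\<in>SG w v T. mu < hs (Ld w v T) s X"
proof -
  define \<alpha> where "\<alpha> = Re (trace (Td w v 1) (W 1))"
  have \<alpha>: "0 < \<alpha>" unfolding \<alpha>_def by (rule trace_W_first_pos)
  define p where "p k = op_scale (1 / \<alpha>) (W k)" for k
  have psd_p: "\<forall>k\<in>{1..T}. psd (Td w v k) (p k)"
    unfolding p_def using psd_W \<alpha> by (auto intro: psd_scale)
  have link: "op_diff (idt (w k) (p k)) (ptr_head (v (Suc k)) (p (Suc k))) = op_scale (1 / \<alpha>) (slot_test k)"
    if "k < T" for k
    using that by (intro ext) (simp add: slot_test_def p_def ptr_head_def idt_def sum_distrib_left
        right_diff_distrib split: list.splits)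
  have psd_link: "\<forall>k. 1 \<le> k \<and> k < T \<longrightarrow>
      psd (Ld w v k) (op_diff (idt (w k) (p k)) (ptr_head (v (Suc k)) (p (Suc k))))"
    using link psd_slot_test \<alpha> by (auto intro: psd_scale)
  have "trace (Td w v 1) (W 1) = complex_of_real \<alpha>"
    using psd_trace_real[OF psd_W[of 1]] T_pos by (simp add: \<alpha>_def)
  then have trace_p: "trace (Td w v 1) (p 1) = 1"
    using \<alpha> by (simp add: p_def trace_def sum_divide_distrib[symmetric])
  define \<tau> where "\<tau> = tester_lift w v p"
  have "is_tester w v T \<tau>"
    unfolding \<tau>_def using dims_pos psd_p psd_link trace_p by (intro tester_lift_is_tester) auto
  then have s: "idt (w T) (\<tau> T) \<in> SG w v T" unfolding SG_eq by blast
  have "op_diff (idt (w T) (\<tau> T)) (op_scale (1 / \<alpha>) top_test)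
      = op_add (idt (w T) (op_diff (\<tau> T) (p T))) (op_scale (1 / \<alpha>) (slot_test T))"
    by (intro ext) (simp add: slot_test_def p_def idt_diff idt_scale algebra_simps)
  moreover have "psd (Ld w v T) (op_add (idt (w T) (op_diff (\<tau> T) (p T))) (op_scale (1 / \<alpha>) (slot_test T)))"
    using tester_lift_above[OF psd_p psd_link T_pos order_refl] psd_slot_test[of T] \<alpha> T_pos
    unfolding \<tau>_def Ld_eq[OF T_pos] by (intro psd_add psd_idt psd_scale) (auto simp: Ld_eq)
  ultimately have "0 \<le> hs (Ld w v T) (op_diff (idt (w T) (\<tau> T)) (op_scale (1 / \<alpha>) top_test)) X"
    using hs_psd_nonneg[OF _ X] by simp
  then have "(1 / \<alpha>) * hs (Ld w v T) top_test X \<le> hs (Ld w v T) (idt (w T) (\<tau> T)) X"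
    by (simp add: hs_diff_left hs_scale_left)
  moreover have "mu < (1 / \<alpha>) * hs (Ld w v T) top_test X"
    using separator_base_point \<delta>_pos \<alpha> by (simp add: \<alpha>_def field_simps)
  ultimately show ?thesis using s by force
qed

end

context separation
begin

theorem exists_dominating_chain:
  assumes X: "psd (Ld w v T) X" and mu: "\<forall>s\<in>SG w v T. hs (Ld w v T) s X \<le> mu"
  shows "\<exists>l Y. is_psd_chain w v T l Y \<and> l \<le> mu \<and> psd (Ld w v T) (op_diff (Y T) X)"
proof (cases "\<exists>Z\<in>candidates. \<forall>t. residual Z t = op_zero")
  case True
  then obtain Z where Z: "Z \<in> candidates" and res: "\<And>t. residual Z t = op_zero" by blast
  obtain l where l: "l \<le> mu" "Z 0 = op_scale l scalar1" using candidatesD(1)[OF Z] by blast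
  have "ptr_head (w t) (Z t) = idt (v t) (Z (t - 1))" if "t \<in> {1..T}" for t
  proof (intro ext)
    fix a b show "ptr_head (w t) (Z t) a b = idt (v t) (Z (t - 1)) a b"
      using fun_cong[OF fun_cong[OF res[of t]], of a b] that by (simp add: residual_def lin_residual_def)
  qed
  then have "is_psd_chain w v T l Z"
    using l candidatesD(2)[OF Z] by (simp add: is_psd_chain_def is_chain_def)
  moreover have "op_diff (Z T) X = Z (Suc T)"
  proof (intro ext)
    fix a b show "op_diff (Z T) X a b = Z (Suc T) a b"
      using fun_cong[OF fun_cong[OF res[of "Suc T"]], of a b]
      by (simp add: residual_def lin_residual_def eq_iff_diff_eq_0[of "Z T a b - X a b"] algebra_simps)
  qed
  ultimately show ?thesis using l candidatesD(3)[OF Z] by metis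
next
  case False
  then obtain W \<delta> where "separator w v T X mu W \<delta>"
    using separation_dichotomy by (auto simp: separator_def separator_axioms_def separation_axioms)
  then interpret separator w v T X mu W \<delta> .
  show ?thesis using tester_exceeds[OF X] mu by force
qed

end

section \<open>Dual solutions in the span of combs\<close>

text \<open>\<open>chi\<^sub>0\<close> plus a multiple \<open>\<beta>\<close> of the identity chain is psd and has support value at most
  \<open>\<lambda>\<^sub>S(chi\<^sub>0) + \<beta>\<close>, so it is dominated by a psd chain normalised to at most that value;
  subtracting \<open>\<beta>\<close> times the identity chain again gives \<open>chi\<close>.\<close>

lemma exists_chain_span_above:
  assumes T: "1 \<le> T" and dims: "\<forall>t\<in>{1..T}. 1 \<le> v t \<and> 1 \<le> w t"
    and SG: "SG w v T \<noteq> {}" and chi0: "herm (Ld w v T) chi0"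
  shows "\<exists>chi. chi \<in> lin_span (Chn w v T) \<and> herm (Ld w v T) chi \<and> psd (Ld w v T) (op_diff chi chi0) \<and>
    lamS (Ld w v T) (SG w v T) chi \<le> lamS (Ld w v T) (SG w v T) chi0"
proof -
  define ds where "ds = Ld w v T"
  define I where "I = id_chain w v T"
  have w: "\<forall>t\<in>{1..T}. 1 \<le> w t" using dims by auto
  have \<kappa>: "0 < id_chain_weight w T" using w by (intro id_chain_weight_pos) auto
  have hs_I: "hs ds s I = 1" if "s \<in> SG w v T" for s
    unfolding ds_def I_def by (rule hs_SG_id_chain[OF that T w])
  obtain k where k: "psd ds (op_diff (op_scale k (id_op ds)) (op_diff op_zero chi0))"
    using herm_le_scaled_id[OF herm_diff[OF herm_zero chi0]] by (auto simp: ds_def)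
  define \<beta> where "\<beta> = k / id_chain_weight w T"
  define X where "X = op_add chi0 (op_scale \<beta> I)"
  have "X = op_diff (op_scale k (id_op ds)) (op_diff op_zero chi0)"
    using \<kappa> by (intro ext) (simp add: X_def \<beta>_def I_def id_chain_def ds_def)
  then have X: "psd ds X" using k by simp
  define mu where "mu = lamS ds (SG w v T) chi0 + \<beta>"
  have mu: "\<forall>s\<in>SG w v T. hs ds s X \<le> mu"
  proof
    fix s assume s: "s \<in> SG w v T"
    have "hs ds s chi0 \<le> lamS ds (SG w v T) chi0"
      unfolding lamS_def using bdd_above_hs_SG[OF T w chi0] s by (intro cSUP_upper2) (auto simp: ds_def)
    then show "hs ds s X \<le> mu" unfolding X_def hs_add_right hs_scale_right hs_I[OF s] mu_def by simp
  qed
  interpret separation w v T X mu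
    using T dims psd_herm[OF X] by unfold_locales (auto simp: ds_def)
  obtain l Y where Y: "is_psd_chain w v T l Y" and l: "l \<le> mu" and YX: "psd ds (op_diff (Y T) X)"
    using exists_dominating_chain X mu by (auto simp: ds_def)
  define chi where "chi = op_diff (Y T) (op_scale \<beta> I)"
  have chi_eq: "chi = op_add (Y T) (op_scale (- \<beta>) I)" by (intro ext) (simp add: chi_def)
  have "op_diff chi chi0 = op_diff (Y T) X" by (intro ext) (simp add: chi_def X_def)
  then have "psd ds (op_diff chi chi0)" using YX by simp
  moreover have "herm ds chi"
  proof -
    have "herm ds (Y T)" using Y T by (auto simp: is_psd_chain_def ds_def intro: psd_herm)
    then show ?thesis unfolding chi_def I_def id_chain_def ds_def by (intro herm_diff herm_scale herm_id_op)
  qed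
  moreover have "chi \<in> lin_span (Chn w v T)"
    unfolding chi_eq I_def using psd_chain_in_lin_span[OF T w Y]
      lin_span_base[OF is_psd_chain_Chn[OF is_psd_chain_id_chain[OF w] T]]
    by (simp add: lin_span_add lin_span_scale)
  moreover have "lamS ds (SG w v T) chi = l - \<beta>"
  proof -
    have "is_chain w v T (l + (- \<beta>) * 1) (\<lambda>t. op_add (Y t) (op_scale (- \<beta>) (id_chain w v t)))"
      using Y is_psd_chain_id_chain[OF w]
      by (intro is_chain_add is_chain_scale) (auto simp: is_psd_chain_def)
    then show ?thesis using lamS_SG_chain[OF SG T] by (simp add: chi_eq ds_def I_def)
  qed
  ultimately show ?thesis using l by (auto simp: ds_def mu_def)
qed

lemma Dset_mono:
  assumes D: "(chi0, q) \<in> Dset ds M J c a C" and chi: "herm ds chi" and dom: "psd ds (op_diff chi chi0)"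
    and C: "\<forall>\<Phi>\<in>C. \<forall>m<M. psd ds (\<Phi> m)"
  shows "(chi, q) \<in> Dset ds M J c a C"
proof -
  define y0 where "y0 = (\<lambda>m. if m < M then (\<lambda>x y. chi0 x y - zq J c a q m x y) else (\<lambda>_ _. 0))"
  define y where "y = (\<lambda>m. if m < M then (\<lambda>x y. chi x y - zq J c a q m x y) else (\<lambda>_ _. 0))"
  have y0: "y0 \<in> dual_cone ds M C" using D by (simp add: Dset_def y0_def)
  have y_eq: "y m = op_add (y0 m) (op_diff chi chi0)" if "m < M" for m
    using that by (intro ext) (simp add: y0_def y_def)
  have "y \<in> dual_cone ds M C"
    unfolding dual_cone_def
  proof (intro CollectI conjI allI impI ballI)
    fix m assume m: "m < M"
    have "herm ds (y0 m)" using y0 m by (simp add: dual_cone_def)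
    then show "herm ds (y m)" unfolding y_eq[OF m] using herm_diff[OF chi psd_herm] dom
      by (intro herm_add herm_diff chi) (use D in \<open>auto simp: Dset_def\<close>)
  next
    fix m :: nat assume "M \<le> m" then show "y m = (\<lambda>_ _. 0)" by (simp add: y_def)
  next
    fix \<Phi> assume \<Phi>: "\<Phi> \<in> C"
    have "tinner ds M \<Phi> y = tinner ds M \<Phi> y0 + (\<Sum>m<M. hs ds (\<Phi> m) (op_diff chi chi0))"
      unfolding tinner_def by (simp add: y_eq hs_add_right sum.distrib)
    moreover have "0 \<le> tinner ds M \<Phi> y0" using y0 \<Phi> by (simp add: dual_cone_def)
    moreover have "0 \<le> (\<Sum>m<M. hs ds (\<Phi> m) (op_diff chi chi0))"
      using C \<Phi> by (intro sum_nonneg hs_psd_nonneg[OF _ dom]) auto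
    ultimately show "0 \<le> tinner ds M \<Phi> y" by simp
  qed
  then show ?thesis using chi D by (simp add: Dset_def y_def)
qed

theorem corollary1:
  fixes T M J :: nat and w v :: "nat \<Rightarrow> nat"
    and c :: tup and a :: "nat \<Rightarrow> tup" and b :: "nat \<Rightarrow> real"
    and Tset C :: "tup set" and S :: "op set"
    and chi0 :: op and q :: "nat \<Rightarrow> real"
  assumes "T \<ge> 1" and "M \<ge> 2"
    and "\<forall>t\<in>{1..T}. 1 \<le> v t \<and> 1 \<le> w t"
    and "\<forall>m<M. herm (Ld w v T) (c m)"
    and "\<forall>j<J. \<forall>m<M. herm (Ld w v T) (a j m)"
    and "Tset \<noteq> {}" and "convex_tup Tset" and "Tset \<subseteq> TG w v T M"
    and "closure {\<Phi>\<in>Tset. \<forall>j<J. tinner (Ld w v T) M \<Phi> (a j) - b j \<le> 0}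
         = {\<Phi>\<in>closure Tset. \<forall>j<J. tinner (Ld w v T) M \<Phi> (a j) - b j \<le> 0}"
    and "closed C" and "convex_tup C" and "cone_tup C" and "C \<subseteq> CG w v T M"
    and "S = SG w v T"
    and "closure Tset = {\<Phi>\<in>C. opsum M \<Phi> \<in> S}"
    and "opt_D (Ld w v T) M J c a b C S (chi0, q)"
  shows "\<exists>chi. opt_D (Ld w v T) M J c a b C S (chi, q) \<and> chi \<in> lin_span (Chn w v T)"
proof -
  note T = assms(1) and dims = assms(3) and S = assms(14) and opt = assms(16)
  have D0: "(chi0, q) \<in> Dset (Ld w v T) M J c a C" using opt by (simp add: opt_D_def)
  have "SG w v T \<noteq> {}" using assms(6,8) by (auto simp: TG_def)
  moreover have "herm (Ld w v T) chi0" using D0 by (simp add: Dset_def)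
  ultimately obtain chi where chi: "chi \<in> lin_span (Chn w v T)" "herm (Ld w v T) chi"
      "psd (Ld w v T) (op_diff chi chi0)" "lamS (Ld w v T) S chi \<le> lamS (Ld w v T) S chi0"
    using exists_chain_span_above[OF T dims] S by blast
  have "(chi, q) \<in> Dset (Ld w v T) M J c a C"
    using Dset_mono[OF D0 chi(2,3)] assms(13) by (auto simp: CG_def)
  moreover have "DS (Ld w v T) S J b chi q \<le> DS (Ld w v T) S J b chi0 q"
    using chi(4) by (simp add: DS_def)
  ultimately have "opt_D (Ld w v T) M J c a b C S (chi, q)"
    using opt by (force simp: opt_D_def)
  then show ?thesis using chi(1) by blast
qed

end
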